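(* Let $V\subseteq\mathcal V$ be finite, $\mathcal E\in\mathit{DProg}(V)$, $W\subseteq\mathcal V$ finite and $Q$ a projector on $\mathcal H_W$. Then $wp^p.\mathcal E.Q=E(\mathcal E^\dagger(Q))$, $wlp^p.\mathcal E.Q=\mathcal N(\mathcal E^\dagger(Q^\perp))$, and $sp^p.\mathcal E.Q=\lceil\mathcal E(Q)\rceil$.
   Context: $\mathcal V$ is a countably infinite set of qubit variables; $\mathcal H_V=\bigotimes_{q\in V}\mathcal H_q$. $\mathcal D(\mathcal H)$: partial density operators; projectors are identified with their image subspaces, ordered by inclusion $\sqsubseteq$; $Q^\perp=I-Q$. $\mathit{DProg}(V)$: completely positive trace-nonincreasing super-operators on $\mathcal L(\mathcal H_V)$; $\mathcal E^\dagger$ its adjoint (${\rm tr}(\mathcal E(A)B)={\rm tr}(A\mathcal E^\dagger(B))$). Convention: operators and super-operators are implicitly extended to $\mathcal H_{V\cup W}$ (and larger systems) by tensoring with identities; all projectors below are regarded on $\mathcal H_{V\cup W}$. $E(A)=\{|\psi\rangle:A|\psi\rangle=|\psi\rangle\}$; $\mathcal N(B)=\{|\psi\rangle:\langle\psi|B|\psi\rangle=0\}$; $\lceil\rho\rceil$ is the support of a positive $\rho$ (span of eigenvectors with nonzero eigenvalues). For projectors $P,Q$: $\mathcal E\models_{tot}(P,Q)$ iff for all finite $X\supseteq V\cup W$ and $\rho\in\mathcal D(\mathcal H_X)$, ${\rm tr}(P\rho)\le{\rm tr}(Q\mathcal E(\rho))$; $\mathcal E\models_{par}(P,Q)$ iff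 for all such $X,\rho$, ${\rm tr}(P\rho)\le{\rm tr}(Q\mathcal E(\rho))+{\rm tr}(\rho)-{\rm tr}(\mathcal E(\rho))$. $wp^p.\mathcal E.Q$ is the largest projector $P$ (w.r.t. $\sqsubseteq$) with $\mathcal E\models_{tot}(P,Q)$; $wlp^p.\mathcal E.Q$ the largest projector $P$ with $\mathcal E\models_{par}(P,Q)$; $sp^p.\mathcal E.Q$ the smallest projector $R$ with $\mathcal E\models_{par}(Q,R)$. *)

theory Defs
  imports Complex_Main
begin

text \<open>Qubit variables are natural numbers (a countably infinite set).
  For a finite set X of variables, the computational basis of H_X is indexed by
  the subsets s of X (s = set of variables in state 1).  Vectors of H_X are
  functions  nat set => complex  vanishing outside Pow X, operators on H_X are
  functions  nat set => nat set => complex  vanishing outside Pow X x Pow X.\<close>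

type_synonym qvec = "nat set \<Rightarrow> complex"
type_synonym qop = "nat set \<Rightarrow> nat set \<Rightarrow> complex"
type_synonym qsop = "qop \<Rightarrow> qop"

definition is_vec :: "nat set \<Rightarrow> qvec \<Rightarrow> bool" where
  "is_vec X v \<longleftrightarrow> (\<forall>s. \<not> s \<subseteq> X \<longrightarrow> v s = 0)"

definition is_op :: "nat set \<Rightarrow> qop \<Rightarrow> bool" where
  "is_op X A \<longleftrightarrow> (\<forall>s t. \<not> (s \<subseteq> X \<and> t \<subseteq> X) \<longrightarrow> A s t = 0)"

definition mapply :: "nat set \<Rightarrow> qop \<Rightarrow> qvec \<Rightarrow> qvec" where
  "mapply X A v = (\<lambda>s. if s \<subseteq> X then (\<Sum>t\<in>Pow X. A s t * v t) else 0)"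

definition mmult :: "nat set \<Rightarrow> qop \<Rightarrow> qop \<Rightarrow> qop" where
  "mmult X A B = (\<lambda>s u. if s \<subseteq> X \<and> u \<subseteq> X then (\<Sum>t\<in>Pow X. A s t * B t u) else 0)"

definition adj :: "qop \<Rightarrow> qop" where
  "adj A = (\<lambda>s t. cnj (A t s))"

definition qtrace :: "nat set \<Rightarrow> qop \<Rightarrow> complex" where
  "qtrace X A = (\<Sum>s\<in>Pow X. A s s)"

definition qinner :: "nat set \<Rightarrow> qvec \<Rightarrow> qvec \<Rightarrow> complex" where
  "qinner X u v = (\<Sum>s\<in>Pow X. cnj (u s) * v s)"

definition positive :: "nat set \<Rightarrow> qop \<Rightarrow> bool" where
  "positive X A \<longleftrightarrow> is_op X A \<and>
     (\<forall>v. is_vec X v \<longrightarrow> qinner X v (mapply X A v) \<in> \<real> \<and> 0 \<le> Re (qinner X v (mapply X A v)))"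

definition pdo :: "nat set \<Rightarrow> qop \<Rightarrow> bool" where
  "pdo X \<rho> \<longleftrightarrow> positive X \<rho> \<and> Re (qtrace X \<rho>) \<le> 1"

definition projector :: "nat set \<Rightarrow> qop \<Rightarrow> bool" where
  "projector X P \<longleftrightarrow> is_op X P \<and> mmult X P P = P \<and> adj P = P"

text \<open>Image subspace of a projector; projectors are identified with it.\<close>
definition img :: "nat set \<Rightarrow> qop \<Rightarrow> qvec set" where
  "img X P = {\<psi>. is_vec X \<psi> \<and> mapply X P \<psi> = \<psi>}"

definition proj_le :: "nat set \<Rightarrow> qop \<Rightarrow> qop \<Rightarrow> bool" where
  "proj_le X P P' \<longleftrightarrow> img X P \<subseteq> img X P'"

definition proj_compl :: "nat set \<Rightarrow> qop \<Rightarrow> qop" where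
  "proj_compl X P = (\<lambda>s t. if s \<subseteq> X \<and> t \<subseteq> X then (if s = t then 1 else 0) - P s t else 0)"

text \<open>Cylindrical extension A \<otimes> I_{X-V} of an operator A on H_V to H_X (V \<subseteq> X).\<close>
definition ext :: "nat set \<Rightarrow> nat set \<Rightarrow> qop \<Rightarrow> qop" where
  "ext V X A = (\<lambda>s t. if s \<subseteq> X \<and> t \<subseteq> X \<and> s - V = t - V then A (s \<inter> V) (t \<inter> V) else 0)"

text \<open>Extension E \<otimes> id_{X-V} of a super-operator E on L(H_V) to L(H_X):
  writing \<rho> = \<Sum>_{a,b} \<rho>_{ab} \<otimes> |a><b| with a,b \<subseteq> X - V, the result is
  \<Sum>_{a,b} E(\<rho>_{ab}) \<otimes> |a><b|.\<close>
definition sext :: "nat set \<Rightarrow> nat set \<Rightarrow> qsop \<Rightarrow> qsop" where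
  "sext V X E \<rho> = (\<lambda>s t. if s \<subseteq> X \<and> t \<subseteq> X then
      E (\<lambda>s' t'. if s' \<subseteq> V \<and> t' \<subseteq> V then \<rho> (s' \<union> (s - V)) (t' \<union> (t - V)) else 0) (s \<inter> V) (t \<inter> V)
    else 0)"

text \<open>DProg(V): completely positive, trace-nonincreasing super-operators on L(H_V).
  Complete positivity: positivity of E \<otimes> id on every larger (finite) system.\<close>
definition DProg :: "nat set \<Rightarrow> qsop \<Rightarrow> bool" where
  "DProg V E \<longleftrightarrow>
     (\<forall>A. is_op V A \<longrightarrow> is_op V (E A)) \<and>
     (\<forall>A B. is_op V A \<longrightarrow> is_op V B \<longrightarrow> E (\<lambda>s t. A s t + B s t) = (\<lambda>s t. E A s t + E B s t)) \<and>
     (\<forall>c A. is_op V A \<longrightarrow> E (\<lambda>s t. c * A s t) = (\<lambda>s t. c * E A s t)) \<and>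
     (\<forall>X \<rho>. finite X \<longrightarrow> V \<subseteq> X \<longrightarrow> positive X \<rho> \<longrightarrow> positive X (sext V X E \<rho>)) \<and>
     (\<forall>\<rho>. positive V \<rho> \<longrightarrow> Re (qtrace V (E \<rho>)) \<le> Re (qtrace V \<rho>))"

definition sadj :: "nat set \<Rightarrow> qsop \<Rightarrow> qsop" where
  "sadj Y F B = (THE G. is_op Y G \<and>
      (\<forall>A. is_op Y A \<longrightarrow> qtrace Y (mmult Y (F A) B) = qtrace Y (mmult Y A G)))"

definition Efix :: "nat set \<Rightarrow> qop \<Rightarrow> qvec set" where
  "Efix Y A = {\<psi>. is_vec Y \<psi> \<and> mapply Y A \<psi> = \<psi>}"

definition Nnull :: "nat set \<Rightarrow> qop \<Rightarrow> qvec set" where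
  "Nnull Y B = {\<psi>. is_vec Y \<psi> \<and> qinner Y \<psi> (mapply Y B \<psi>) = 0}"

definition supp :: "nat set \<Rightarrow> qop \<Rightarrow> qvec set" where
  "supp Y A = {\<psi>. \<exists>S c. finite S \<and>
       S \<subseteq> {v. is_vec Y v \<and> (\<exists>e. e \<noteq> 0 \<and> mapply Y A v = (\<lambda>s. e * v s))} \<and>
       \<psi> = (\<lambda>s. \<Sum>v\<in>S. c v * v s)}"

definition tot :: "nat set \<Rightarrow> nat set \<Rightarrow> qsop \<Rightarrow> qop \<Rightarrow> qop \<Rightarrow> bool" where
  "tot V Y E P Q \<longleftrightarrow> (\<forall>X \<rho>. finite X \<longrightarrow> Y \<subseteq> X \<longrightarrow> pdo X \<rho> \<longrightarrow>
     Re (qtrace X (mmult X (ext Y X P) \<rho>)) \<le> Re (qtrace X (mmult X (ext Y X Q) (sext V X E \<rho>))))"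

definition par :: "nat set \<Rightarrow> nat set \<Rightarrow> qsop \<Rightarrow> qop \<Rightarrow> qop \<Rightarrow> bool" where
  "par V Y E P Q \<longleftrightarrow> (\<forall>X \<rho>. finite X \<longrightarrow> Y \<subseteq> X \<longrightarrow> pdo X \<rho> \<longrightarrow>
     Re (qtrace X (mmult X (ext Y X P) \<rho>)) \<le>
       Re (qtrace X (mmult X (ext Y X Q) (sext V X E \<rho>))) + Re (qtrace X \<rho>) - Re (qtrace X (sext V X E \<rho>)))"

definition wpp :: "nat set \<Rightarrow> nat set \<Rightarrow> qsop \<Rightarrow> qop \<Rightarrow> qop" where
  "wpp V Y E Q = (THE P. projector Y P \<and> tot V Y E P Q \<and>
      (\<forall>P'. projector Y P' \<and> tot V Y E P' Q \<longrightarrow> proj_le Y P' P))"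

definition wlpp :: "nat set \<Rightarrow> nat set \<Rightarrow> qsop \<Rightarrow> qop \<Rightarrow> qop" where
  "wlpp V Y E Q = (THE P. projector Y P \<and> par V Y E P Q \<and>
      (\<forall>P'. projector Y P' \<and> par V Y E P' Q \<longrightarrow> proj_le Y P' P))"

definition spp :: "nat set \<Rightarrow> nat set \<Rightarrow> qsop \<Rightarrow> qop \<Rightarrow> qop" where
  "spp V Y E Q = (THE R. projector Y R \<and> par V Y E Q R \<and>
      (\<forall>R'. projector Y R' \<and> par V Y E Q R' \<longrightarrow> proj_le Y R R'))"

end

theory Submission
  imports Defs "Jordan_Normal_Form.Schur_Decomposition"
begin

text \<open>
  Everything rests on the duality \<open>tr(Q \<cdot> E(\<rho>)) = tr(E\<^sup>\<dagger>(Q) \<cdot> \<rho>)\<close> for the cylindrical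
  extensions of \<open>E\<close> and \<open>Q\<close>, together with \<open>0 \<sqsubseteq> E\<^sup>\<dagger>(Q) \<sqsubseteq> I\<close> for a projector \<open>Q\<close>.
  Total correctness of \<open>(P, Q)\<close> thus reads \<open>tr(P\<rho>) \<le> tr(E\<^sup>\<dagger>(Q)\<rho>)\<close>. Testing it on the pure
  state of a unit vector \<open>\<psi>\<close> in \<open>P\<close> gives \<open>\<langle>\<psi>, E\<^sup>\<dagger>(Q)\<psi>\<rangle> \<ge> 1\<close>, which with \<open>E\<^sup>\<dagger>(Q) \<sqsubseteq> I\<close>
  forces \<open>E\<^sup>\<dagger>(Q)\<psi> = \<psi>\<close>; conversely, if \<open>E\<^sup>\<dagger>(Q)\<close> fixes \<open>P\<close> then it commutes with \<open>P\<close> and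
  \<open>tr(E\<^sup>\<dagger>(Q)\<rho>) - tr(P\<rho>) = tr(E\<^sup>\<dagger>(Q) \<cdot> P\<^sup>\<bottom>\<rho>P\<^sup>\<bottom>) \<ge> 0\<close>.
  Partial correctness of \<open>(P, Q)\<close> reads \<open>tr(P\<rho>) + tr(E\<^sup>\<dagger>(Q\<^sup>\<bottom>)\<rho>) \<le> tr \<rho>\<close>, and the same two
  arguments identify it with \<open>P \<sqsubseteq> \<N>(E\<^sup>\<dagger>(Q\<^sup>\<bottom>))\<close> and, for the postcondition, with
  \<open>Q\<^sup>\<bottom>E(P) = 0\<close>, i.e. \<open>range E(P) \<sqsubseteq> Q\<close>. The extremal projectors are then the projectors onto
  these subspaces, which exist by Gram--Schmidt; finally the range of the positive operator
  \<open>E(Q)\<close> is its support, because a Schur decomposition provides an eigenvector with nonzero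
  eigenvalue for every operator of nonzero trace.
\<close>

section \<open>Operators on coordinate spaces\<close>

definition idop :: "nat set \<Rightarrow> qop" where
  "idop X = (\<lambda>s t. if s \<subseteq> X \<and> t \<subseteq> X \<and> s = t then 1 else 0)"

definition outer :: "qvec \<Rightarrow> qvec \<Rightarrow> qop" where
  "outer u v = (\<lambda>s t. u s * cnj (v t))"

lemma mmult_eq: "s \<subseteq> X \<Longrightarrow> u \<subseteq> X \<Longrightarrow> mmult X A B s u = (\<Sum>t\<in>Pow X. A s t * B t u)"
  unfolding mmult_def by simp

lemma mapply_eq: "s \<subseteq> X \<Longrightarrow> mapply X A v s = (\<Sum>t\<in>Pow X. A s t * v t)"
  unfolding mapply_def by simp

lemma mapply_out: "\<not> s \<subseteq> X \<Longrightarrow> mapply X A v s = 0"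
  unfolding mapply_def by simp

lemma mmult_assoc: "mmult X (mmult X A B) C = mmult X A (mmult X B C)"
proof (intro ext)
  fix s u
  show "mmult X (mmult X A B) C s u = mmult X A (mmult X B C) s u"
  proof (cases "s \<subseteq> X \<and> u \<subseteq> X")
    case True
    have "mmult X (mmult X A B) C s u = (\<Sum>t\<in>Pow X. (\<Sum>r\<in>Pow X. A s r * B r t) * C t u)"
      using True by (simp add: mmult_eq)
    also have "\<dots> = (\<Sum>t\<in>Pow X. \<Sum>r\<in>Pow X. A s r * B r t * C t u)"
      by (simp add: sum_distrib_right)
    also have "\<dots> = (\<Sum>r\<in>Pow X. \<Sum>t\<in>Pow X. A s r * B r t * C t u)"
      by (rule sum.swap)
    also have "\<dots> = (\<Sum>r\<in>Pow X. A s r * (\<Sum>t\<in>Pow X. B r t * C t u))"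
      by (simp add: sum_distrib_left mult.assoc)
    also have "\<dots> = mmult X A (mmult X B C) s u"
      using True by (simp add: mmult_eq)
    finally show ?thesis .
  qed (auto simp: mmult_def)
qed

lemma qtrace_mmult_comm: "qtrace X (mmult X A B) = qtrace X (mmult X B A)"
proof -
  have "qtrace X (mmult X A B) = (\<Sum>s\<in>Pow X. \<Sum>t\<in>Pow X. A s t * B t s)"
    unfolding qtrace_def by (intro sum.cong refl) (simp add: mmult_eq)
  also have "\<dots> = (\<Sum>t\<in>Pow X. \<Sum>s\<in>Pow X. B t s * A s t)"
    by (subst sum.swap) (simp add: mult.commute)
  also have "\<dots> = qtrace X (mmult X B A)"
    unfolding qtrace_def by (intro sum.cong refl) (simp add: mmult_eq)
  finally show ?thesis .
qed

lemma is_op_mmult[simp]: "is_op X (mmult X A B)"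
  unfolding is_op_def mmult_def by auto

lemma is_vec_mapply[simp]: "is_vec X (mapply X A v)"
  unfolding is_vec_def mapply_def by auto

lemma is_op_idop[simp]: "is_op X (idop X)"
  unfolding is_op_def idop_def by auto

lemma mapply_mmult: "mapply X (mmult X A B) v = mapply X A (mapply X B v)"
proof (intro ext)
  fix s
  show "mapply X (mmult X A B) v s = mapply X A (mapply X B v) s"
  proof (cases "s \<subseteq> X")
    case True
    have "mapply X (mmult X A B) v s = (\<Sum>t\<in>Pow X. (\<Sum>r\<in>Pow X. A s r * B r t) * v t)"
      using True by (simp add: mmult_eq mapply_eq)
    also have "\<dots> = (\<Sum>t\<in>Pow X. \<Sum>r\<in>Pow X. A s r * B r t * v t)"
      by (simp add: sum_distrib_right)
    also have "\<dots> = (\<Sum>r\<in>Pow X. \<Sum>t\<in>Pow X. A s r * B r t * v t)"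
      by (rule sum.swap)
    also have "\<dots> = (\<Sum>r\<in>Pow X. A s r * (\<Sum>t\<in>Pow X. B r t * v t))"
      by (simp add: sum_distrib_left mult.assoc)
    also have "\<dots> = mapply X A (mapply X B v) s"
      using True by (simp add: mapply_eq)
    finally show ?thesis .
  qed (auto simp: mapply_def)
qed

lemma qinner_mapply_adj: "qinner X u (mapply X A v) = qinner X (mapply X (adj A) u) v"
proof -
  have "qinner X u (mapply X A v) = (\<Sum>s\<in>Pow X. \<Sum>t\<in>Pow X. cnj (u s) * A s t * v t)"
    unfolding qinner_def by (intro sum.cong refl) (simp add: mapply_eq sum_distrib_left mult.assoc)
  also have "\<dots> = (\<Sum>t\<in>Pow X. \<Sum>s\<in>Pow X. cnj (u s) * A s t * v t)"
    by (rule sum.swap)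
  also have "\<dots> = qinner X (mapply X (adj A) u) v"
    unfolding qinner_def by (intro sum.cong refl) (simp add: mapply_eq adj_def sum_distrib_right sum_distrib_left mult_ac)
  finally show ?thesis .
qed

lemma adj_mmult: "adj (mmult X A B) = mmult X (adj B) (adj A)"
  unfolding adj_def mmult_def by (intro ext) (auto simp: mult.commute)

lemma mapply_idop: "finite X \<Longrightarrow> is_vec X v \<Longrightarrow> mapply X (idop X) v = v"
proof (intro ext)
  fix s assume fin: "finite X" and v: "is_vec X v"
  show "mapply X (idop X) v s = v s"
  proof (cases "s \<subseteq> X")
    case True
    have "mapply X (idop X) v s = (\<Sum>t\<in>Pow X. if t = s then v t else 0)"
      using True by (auto simp: mapply_eq idop_def intro!: sum.cong)
    also have "\<dots> = v s" using True fin by (simp add: sum.delta)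
    finally show ?thesis .
  qed (use v in \<open>auto simp: mapply_def is_vec_def\<close>)
qed

lemma mmult_idop_left: "finite X \<Longrightarrow> is_op X A \<Longrightarrow> mmult X (idop X) A = A"
proof (intro ext)
  fix s u assume fin: "finite X" and A: "is_op X A"
  show "mmult X (idop X) A s u = A s u"
  proof (cases "s \<subseteq> X \<and> u \<subseteq> X")
    case True
    have "mmult X (idop X) A s u = (\<Sum>t\<in>Pow X. if t = s then A t u else 0)"
      using True by (auto simp: mmult_eq idop_def intro!: sum.cong)
    also have "\<dots> = A s u" using True fin by (simp add: sum.delta)
    finally show ?thesis .
  qed (use A in \<open>auto simp: mmult_def is_op_def\<close>)
qed

lemma mmult_idop_right: "finite X \<Longrightarrow> is_op X A \<Longrightarrow> mmult X A (idop X) = A"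
proof (intro ext)
  fix s u assume fin: "finite X" and A: "is_op X A"
  show "mmult X A (idop X) s u = A s u"
  proof (cases "s \<subseteq> X \<and> u \<subseteq> X")
    case True
    have "mmult X A (idop X) s u = (\<Sum>t\<in>Pow X. if t = u then A s t else 0)"
      using True by (auto simp: mmult_eq idop_def intro!: sum.cong)
    also have "\<dots> = A s u" using True fin by (simp add: sum.delta)
    finally show ?thesis .
  qed (use A in \<open>auto simp: mmult_def is_op_def\<close>)
qed

lemma adj_idop[simp]: "adj (idop X) = idop X"
  unfolding adj_def idop_def by (intro ext) auto

lemma mmult_add_left: "mmult X (\<lambda>s t. A s t + B s t) C = (\<lambda>s t. mmult X A C s t + mmult X B C s t)"
  unfolding mmult_def by (intro ext) (auto simp: distrib_right sum.distrib)

lemma mmult_add_right: "mmult X C (\<lambda>s t. A s t + B s t) = (\<lambda>s t. mmult X C A s t + mmult X C B s t)"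
  unfolding mmult_def by (intro ext) (auto simp: distrib_left sum.distrib)

lemma mmult_diff_left: "mmult X (\<lambda>s t. A s t - B s t) C = (\<lambda>s t. mmult X A C s t - mmult X B C s t)"
  unfolding mmult_def by (intro ext) (auto simp: left_diff_distrib sum_subtractf)

lemma mmult_diff_right: "mmult X C (\<lambda>s t. A s t - B s t) = (\<lambda>s t. mmult X C A s t - mmult X C B s t)"
  unfolding mmult_def by (intro ext) (auto simp: right_diff_distrib sum_subtractf)

lemma mmult_scale_left: "mmult X (\<lambda>s t. c * A s t) C = (\<lambda>s t. c * mmult X A C s t)"
  unfolding mmult_def by (intro ext) (auto simp: sum_distrib_left mult.assoc)

lemma mmult_scale_right: "mmult X C (\<lambda>s t. c * A s t) = (\<lambda>s t. c * mmult X C A s t)"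
  unfolding mmult_def by (intro ext) (auto simp: sum_distrib_left mult.left_commute)

lemma qtrace_add: "qtrace X (\<lambda>s t. A s t + B s t) = qtrace X A + qtrace X B"
  unfolding qtrace_def by (simp add: sum.distrib)

lemma qtrace_diff: "qtrace X (\<lambda>s t. A s t - B s t) = qtrace X A - qtrace X B"
  unfolding qtrace_def by (simp add: sum_subtractf)

lemma qtrace_scale: "qtrace X (\<lambda>s t. c * A s t) = c * qtrace X A"
  unfolding qtrace_def by (simp add: sum_distrib_left)

lemma mapply_add_vec: "mapply X A (\<lambda>s. u s + v s) = (\<lambda>s. mapply X A u s + mapply X A v s)"
  unfolding mapply_def by (intro ext) (auto simp: distrib_left sum.distrib)

lemma mapply_diff_vec: "mapply X A (\<lambda>s. u s - v s) = (\<lambda>s. mapply X A u s - mapply X A v s)"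
  unfolding mapply_def by (intro ext) (auto simp: right_diff_distrib sum_subtractf)

lemma mapply_scale_vec: "mapply X A (\<lambda>s. c * u s) = (\<lambda>s. c * mapply X A u s)"
  unfolding mapply_def by (intro ext) (auto simp: sum_distrib_left mult.left_commute)

lemma mapply_add_op: "mapply X (\<lambda>s t. A s t + B s t) u = (\<lambda>s. mapply X A u s + mapply X B u s)"
  unfolding mapply_def by (intro ext) (auto simp: distrib_right sum.distrib)

lemma mapply_diff_op: "mapply X (\<lambda>s t. A s t - B s t) u = (\<lambda>s. mapply X A u s - mapply X B u s)"
  unfolding mapply_def by (intro ext) (auto simp: left_diff_distrib sum_subtractf)

lemma mapply_scale_op: "mapply X (\<lambda>s t. c * A s t) u = (\<lambda>s. c * mapply X A u s)"
  unfolding mapply_def by (intro ext) (auto simp: sum_distrib_left mult.assoc)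

lemma qinner_add_right: "qinner X w (\<lambda>s. u s + v s) = qinner X w u + qinner X w v"
  unfolding qinner_def by (simp add: distrib_left sum.distrib)

lemma qinner_diff_right: "qinner X w (\<lambda>s. u s - v s) = qinner X w u - qinner X w v"
  unfolding qinner_def by (simp add: right_diff_distrib sum_subtractf)

lemma qinner_scale_right: "qinner X w (\<lambda>s. c * u s) = c * qinner X w u"
  unfolding qinner_def by (simp add: sum_distrib_left mult.left_commute)

lemma qinner_add_left: "qinner X (\<lambda>s. u s + v s) w = qinner X u w + qinner X v w"
  unfolding qinner_def by (simp add: distrib_right sum.distrib)

lemma qinner_scale_left: "qinner X (\<lambda>s. c * u s) w = cnj c * qinner X u w"
  unfolding qinner_def by (simp add: sum_distrib_left mult.assoc)

lemma qinner_cnj: "cnj (qinner X u v) = qinner X v u"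
  unfolding qinner_def by (simp add: mult.commute)

lemma qinner_self_real: "qinner X v v = complex_of_real (\<Sum>s\<in>Pow X. (cmod (v s))\<^sup>2)"
  unfolding qinner_def of_real_sum by (intro sum.cong refl) (metis complex_norm_square mult.commute)

lemma qinner_self_nonneg: "0 \<le> Re (qinner X v v)"
  by (simp add: qinner_self_real sum_nonneg)

lemma qinner_self_zero:
  assumes "finite X" "is_vec X v" "qinner X v v = 0" shows "v = (\<lambda>s. 0)"
proof (intro ext)
  fix s
  have "complex_of_real (\<Sum>s\<in>Pow X. (cmod (v s))\<^sup>2) = 0" using assms(3) by (simp only: qinner_self_real)
  hence "(\<Sum>s\<in>Pow X. (cmod (v s))\<^sup>2) = 0" by (simp only: of_real_eq_0_iff)
  hence "\<forall>s\<in>Pow X. (cmod (v s))\<^sup>2 = 0"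
    using assms(1) by (subst sum_nonneg_eq_0_iff[symmetric]) auto
  thus "v s = 0" using assms(2) unfolding is_vec_def by (cases "s \<subseteq> X") auto
qed

lemma mapply_sum_vec: "mapply X A (\<lambda>s. \<Sum>v\<in>S. f v s) = (\<lambda>s. \<Sum>v\<in>S. mapply X A (f v) s)"
  unfolding mapply_def by (intro ext) (auto simp: sum_distrib_left intro: sum.swap)

lemma mapply_zero_op: "mapply X (\<lambda>s t. 0) v = (\<lambda>s. 0)"
  unfolding mapply_def by auto

lemma mapply_zero_vec: "mapply X A (\<lambda>s. 0) = (\<lambda>s. 0)"
  unfolding mapply_def by auto

lemma vec_eq_of_diff_zero: "(\<lambda>s. u s - v s) = (\<lambda>s. 0) \<Longrightarrow> u = (v :: qvec)"
  by (metis eq_iff_diff_eq_0 ext)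

lemma is_vec_lin: "is_vec X u \<Longrightarrow> is_vec X v \<Longrightarrow> is_vec X (\<lambda>s. u s + c * v s)"
  unfolding is_vec_def by auto

lemma is_op_diff: "is_op X A \<Longrightarrow> is_op X B \<Longrightarrow> is_op X (\<lambda>s t. A s t - B s t)"
  unfolding is_op_def by auto

lemma adj_zero: "adj (\<lambda>s t. 0) = (\<lambda>s t. 0)"
  unfolding adj_def by simp

lemma adj_idop_diff: "adj P = P \<Longrightarrow> adj (\<lambda>s t. idop X s t - P s t) = (\<lambda>s t. idop X s t - P s t)"
  using adj_idop[of X] unfolding adj_def by (intro ext) (metis complex_cnj_diff)

lemma qtrace_mmult_cycle3:
  "qtrace X (mmult X (mmult X (mmult X A B) A) \<rho>) = qtrace X (mmult X B (mmult X (mmult X A \<rho>) A))"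
proof -
  have "qtrace X (mmult X (mmult X (mmult X A B) A) \<rho>) = qtrace X (mmult X A (mmult X B (mmult X A \<rho>)))"
    by (simp add: mmult_assoc)
  also have "\<dots> = qtrace X (mmult X (mmult X B (mmult X A \<rho>)) A)" by (rule qtrace_mmult_comm)
  also have "\<dots> = qtrace X (mmult X B (mmult X (mmult X A \<rho>) A))" by (simp add: mmult_assoc)
  finally show ?thesis .
qed

definition unitv :: "nat set \<Rightarrow> qvec" where
  "unitv t = (\<lambda>s. if s = t then 1 else 0)"

definition column :: "nat set \<Rightarrow> qop \<Rightarrow> nat set \<Rightarrow> qvec" where
  "column X C t = (\<lambda>s. if s \<subseteq> X then C s t else 0)"

lemma is_vec_unitv: "t \<subseteq> X \<Longrightarrow> is_vec X (unitv t)"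
  unfolding is_vec_def unitv_def by auto

lemma is_vec_column[simp]: "is_vec X (column X C t)"
  unfolding is_vec_def column_def by auto

lemma mapply_unitv: "finite X \<Longrightarrow> t \<subseteq> X \<Longrightarrow> mapply X A (unitv t) = column X A t"
  unfolding mapply_def unitv_def column_def by (intro ext) (auto simp: if_distrib cong: if_cong)

lemma qinner_unitv_left: "finite X \<Longrightarrow> s \<subseteq> X \<Longrightarrow> qinner X (unitv s) v = v s"
proof -
  assume "finite X" "s \<subseteq> X"
  have "(\<Sum>r\<in>Pow X. cnj (unitv s r) * v r) = (\<Sum>r\<in>Pow X. if r = s then v s else 0)"
    by (intro sum.cong) (auto simp: unitv_def)
  thus ?thesis unfolding qinner_def using \<open>finite X\<close> \<open>s \<subseteq> X\<close> by (simp add: sum.delta')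
qed

lemma mapply_column: "t \<subseteq> X \<Longrightarrow> mapply X A (column X B t) = column X (mmult X A B) t"
  unfolding column_def by (intro ext) (auto simp: mapply_eq mapply_out mmult_eq intro!: sum.cong)

lemma op_eqI_column:
  assumes "is_op X A" "is_op X B" "\<And>t. t \<subseteq> X \<Longrightarrow> column X A t = column X B t"
  shows "A = B"
proof (intro ext)
  fix s t
  show "A s t = B s t"
  proof (cases "s \<subseteq> X \<and> t \<subseteq> X")
    case True
    hence "column X A t s = column X B t s" using assms(3) by simp
    thus ?thesis using True by (simp add: column_def)
  qed (use assms(1,2) in \<open>auto simp: is_op_def\<close>)
qed

lemma mmult_eq_right_column:
  assumes "is_op X B" and "\<And>t. t \<subseteq> X \<Longrightarrow> mapply X A (column X B t) = column X B t"
  shows "mmult X A B = B"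
  by (rule op_eqI_column[OF is_op_mmult assms(1)]) (simp add: assms(2) flip: mapply_column)

lemma mmult_eq_zero_column:
  assumes "\<And>t. t \<subseteq> X \<Longrightarrow> mapply X A (column X B t) = (\<lambda>s. 0)"
  shows "mmult X A B = (\<lambda>s t. 0)"
proof (rule op_eqI_column[OF is_op_mmult])
  fix t assume t: "t \<subseteq> X"
  have "column X (mmult X A B) t = (\<lambda>s. 0)" using assms[OF t] mapply_column[OF t, of A B] by simp
  thus "column X (mmult X A B) t = column X (\<lambda>s t. 0) t" by (simp add: column_def)
qed (simp add: is_op_def)

section \<open>Positive operators\<close>

lemma positiveD:
  "positive X A \<Longrightarrow> is_vec X v \<Longrightarrow> qinner X v (mapply X A v) \<in> \<real>"
  "positive X A \<Longrightarrow> is_vec X v \<Longrightarrow> 0 \<le> Re (qinner X v (mapply X A v))"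
  "positive X A \<Longrightarrow> is_op X A"
  unfolding positive_def by auto

lemma qinner_mapply_add_scaled:
  "qinner X (\<lambda>s. \<psi> s + t * \<phi> s) (mapply X A (\<lambda>s. \<psi> s + t * \<phi> s)) =
     qinner X \<psi> (mapply X A \<psi>) + t * qinner X \<psi> (mapply X A \<phi>)
     + cnj t * qinner X \<phi> (mapply X A \<psi>) + cnj t * t * qinner X \<phi> (mapply X A \<phi>)"
  by (simp add: mapply_add_vec mapply_scale_vec qinner_add_left qinner_add_right
        qinner_scale_left qinner_scale_right algebra_simps)

lemma positive_hermitian:
  assumes fin: "finite X" and A: "positive X A"
  shows "adj A = A"
proof (intro ext)
  fix s t
  show "adj A s t = A s t"
  proof (cases "s \<subseteq> X \<and> t \<subseteq> X")
    case False
    with positiveD(3)[OF A] show ?thesis unfolding adj_def is_op_def by auto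
  next
    case True
    hence s: "s \<subseteq> X" and t: "t \<subseteq> X" by auto
    \<comment> \<open>polarisation: test positivity on \<open>e\<^sub>s + c e\<^sub>t\<close> for \<open>c = 1\<close> and \<open>c = \<i>\<close>\<close>
    have entry: "qinner X (unitv u) (mapply X A (unitv w)) = A u w" if "u \<subseteq> X" "w \<subseteq> X" for u w
      using that fin by (simp add: mapply_unitv qinner_unitv_left column_def)
    have real: "A s s + c * A s t + cnj c * A t s + cnj c * c * A t t \<in> \<real>" for c
    proof -
      have "qinner X (\<lambda>r. unitv s r + c * unitv t r) (mapply X A (\<lambda>r. unitv s r + c * unitv t r)) \<in> \<real>"
        by (rule positiveD(1)[OF A is_vec_lin[OF is_vec_unitv[OF s] is_vec_unitv[OF t]]])
      thus ?thesis unfolding qinner_mapply_add_scaled using entry s t by simp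
    qed
    have diag: "A s s + A t t \<in> \<real>"
      using positiveD(1)[OF A is_vec_unitv[OF s]] positiveD(1)[OF A is_vec_unitv[OF t]] entry s t
      by (simp add: Reals_add)
    have "(A s s + A t t) + (A s t + A t s) \<in> \<real>"
      using real[of 1] by (simp add: algebra_simps)
    hence re: "A s t + A t s \<in> \<real>" using diag by (metis Reals_diff add_diff_cancel_left')
    have "(A s s + A t t) + (\<i> * A s t - \<i> * A t s) \<in> \<real>"
      using real[of \<i>] by (simp add: algebra_simps)
    hence im: "\<i> * A s t - \<i> * A t s \<in> \<real>" using diag by (metis Reals_diff add_diff_cancel_left')
    have "cnj (A t s) = A s t"
      using re im by (simp add: complex_is_Real_iff complex_eq_iff)
    thus ?thesis unfolding adj_def .
  qed
qed

lemma linear_coeff_zero_of_quadratic_nonneg: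
  fixes b c :: real
  assumes c: "0 \<le> c" and H: "\<And>r. 0 \<le> 2 * r * b + r * r * c"
  shows "b = 0"
proof (rule ccontr)
  assume b: "b \<noteq> 0"
  define r where "r = - b / (c + 1)"
  have rc: "r * (c + 1) = - b" unfolding r_def using c by simp
  have "0 \<le> (c + 1) * (c + 1) * (2 * r * b + r * r * c)" using H[of r] c by simp
  also have "\<dots> = 2 * (r * (c + 1)) * b * (c + 1) + (r * (c + 1)) * (r * (c + 1)) * c"
    by (simp add: algebra_simps)
  also have "\<dots> = - b * b * (c + 2)" unfolding rc by (simp add: algebra_simps)
  finally have le: "b * b * (c + 2) \<le> 0" by simp
  have "b * b > 0" using b by (metis not_real_square_gt_zero)
  hence "b * b * (c + 2) > 0" using c by simp
  with le show False by simp
qed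

lemma positive_mapply_zero:
  assumes fin: "finite X" and A: "positive X A" and v: "is_vec X \<psi>"
    and z: "qinner X \<psi> (mapply X A \<psi>) = 0"
  shows "mapply X A \<psi> = (\<lambda>s. 0)"
proof -
  define \<phi> where "\<phi> = mapply X A \<psi>"
  define b where "b = qinner X \<phi> \<phi>"
  define c where "c = qinner X \<phi> (mapply X A \<phi>)"
  have a: "qinner X \<psi> (mapply X A \<phi>) = b"
    unfolding b_def \<phi>_def by (subst qinner_mapply_adj) (simp add: positive_hermitian[OF fin A])
  have bR: "b = complex_of_real (Re b)" unfolding b_def by (simp add: qinner_self_real)
  have c0: "0 \<le> Re c" unfolding c_def \<phi>_def using positiveD(2)[OF A is_vec_mapply] .
  \<comment> \<open>\<open>\<langle>\<psi> + r A\<psi>, A(\<psi> + r A\<psi>)\<rangle> \<ge> 0\<close> for all real \<open>r\<close> forces \<open>\<parallel>A\<psi>\<parallel>\<^sup>2 = 0\<close>\<close>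
  have "0 \<le> 2 * r * Re b + r * r * Re c" for r :: real
  proof -
    have "0 \<le> Re (qinner X (\<lambda>s. \<psi> s + complex_of_real r * \<phi> s) (mapply X A (\<lambda>s. \<psi> s + complex_of_real r * \<phi> s)))"
      by (rule positiveD(2)[OF A is_vec_lin[OF v]]) (simp add: \<phi>_def)
    also have "\<dots> = Re (complex_of_real r * b + complex_of_real r * b + complex_of_real r * complex_of_real r * c)"
      unfolding qinner_mapply_add_scaled z a c_def by (simp add: b_def \<phi>_def)
    also have "\<dots> = 2 * r * Re b + r * r * Re c" using bR by simp
    finally show ?thesis .
  qed
  hence "Re b = 0" by (rule linear_coeff_zero_of_quadratic_nonneg[OF c0])
  hence "b = 0" using bR by simp
  thus ?thesis unfolding b_def \<phi>_def using qinner_self_zero[OF fin is_vec_mapply] by simp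
qed

lemma qtrace_sandwich:
  "qtrace X (mmult X (mmult X (adj C) \<sigma>) C) = (\<Sum>t\<in>Pow X. qinner X (column X C t) (mapply X \<sigma> (column X C t)))"
  unfolding qtrace_def
proof (intro sum.cong refl)
  fix t assume t: "t \<in> Pow X"
  have "mmult X (mmult X (adj C) \<sigma>) C t t = (\<Sum>u\<in>Pow X. \<Sum>r\<in>Pow X. cnj (C r t) * \<sigma> r u * C u t)"
    using t by (simp add: mmult_eq adj_def sum_distrib_right)
  also have "\<dots> = (\<Sum>r\<in>Pow X. \<Sum>u\<in>Pow X. cnj (C r t) * \<sigma> r u * C u t)"
    by (rule sum.swap)
  also have "\<dots> = qinner X (column X C t) (mapply X \<sigma> (column X C t))"
    unfolding qinner_def by (intro sum.cong refl) (simp add: mapply_eq column_def sum_distrib_left mult.assoc)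
  finally show "mmult X (mmult X (adj C) \<sigma>) C t t = qinner X (column X C t) (mapply X \<sigma> (column X C t))" .
qed

lemma qtrace_sandwich_nonneg:
  assumes "positive X \<sigma>"
  shows "qtrace X (mmult X (mmult X (adj C) \<sigma>) C) \<in> \<real>" "0 \<le> Re (qtrace X (mmult X (mmult X (adj C) \<sigma>) C))"
  unfolding qtrace_sandwich using positiveD(1,2)[OF assms is_vec_column]
  by (auto intro!: sum_in_Reals sum_nonneg)

lemma mmult_zero_of_qtrace_sandwich_zero:
  assumes fin: "finite X" and \<sigma>: "positive X \<sigma>" and z: "Re (qtrace X (mmult X (mmult X (adj C) \<sigma>) C)) = 0"
  shows "mmult X \<sigma> C = (\<lambda>s t. 0)"
proof (rule mmult_eq_zero_column)
  fix t assume t: "t \<subseteq> X"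
  have "(\<Sum>t\<in>Pow X. Re (qinner X (column X C t) (mapply X \<sigma> (column X C t)))) = 0"
    using z unfolding qtrace_sandwich by (simp add: Re_sum)
  hence "Re (qinner X (column X C t) (mapply X \<sigma> (column X C t))) = 0"
    using fin t positiveD(2)[OF \<sigma> is_vec_column] by (subst (asm) sum_nonneg_eq_0_iff) auto
  moreover have "qinner X (column X C t) (mapply X \<sigma> (column X C t)) \<in> \<real>"
    by (rule positiveD(1)[OF \<sigma> is_vec_column])
  ultimately have "qinner X (column X C t) (mapply X \<sigma> (column X C t)) = 0"
    by (simp add: complex_is_Real_iff complex_eq_iff)
  thus "mapply X \<sigma> (column X C t) = (\<lambda>s. 0)" by (rule positive_mapply_zero[OF fin \<sigma> is_vec_column])
qed

lemma mmult_outer_left: "is_vec X w \<Longrightarrow> mmult X P (outer w w) = outer (mapply X P w) w"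
  unfolding outer_def
  by (intro ext) (auto simp: mmult_def mapply_def is_vec_def sum_distrib_right mult.assoc)

lemma mmult_outer_right: "is_vec X w \<Longrightarrow> mmult X (outer w w) P = outer w (mapply X (adj P) w)"
  unfolding outer_def
  by (intro ext) (auto simp: mmult_def mapply_def is_vec_def adj_def sum_distrib_left mult_ac)

lemma mmult_outer_outer: "is_vec X w \<Longrightarrow> mmult X (outer w w) (outer w w) = (\<lambda>s t. qinner X w w * outer w w s t)"
  unfolding outer_def
  by (intro ext) (auto simp: mmult_def qinner_def is_vec_def sum_distrib_left sum_distrib_right mult_ac)

lemma mapply_outer: "is_vec X w \<Longrightarrow> mapply X (outer w w) v = (\<lambda>s. qinner X w v * w s)"
  unfolding outer_def
  by (intro ext) (auto simp: mapply_def qinner_def is_vec_def sum_distrib_left mult_ac)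

lemma is_op_outer: "is_vec X w \<Longrightarrow> is_op X (outer w w)"
  unfolding outer_def is_op_def is_vec_def by auto

lemma qtrace_mmult_outer: "is_vec X \<psi> \<Longrightarrow> qtrace X (mmult X A (outer \<psi> \<psi>)) = qinner X \<psi> (mapply X A \<psi>)"
  unfolding qtrace_def qinner_def
  by (intro sum.cong refl) (auto simp: mmult_eq mapply_eq outer_def sum_distrib_left mult_ac)

lemma qtrace_outer: "qtrace X (outer \<psi> \<psi>) = qinner X \<psi> \<psi>"
  unfolding qtrace_def qinner_def outer_def by (simp add: mult.commute)

lemma positive_scale:
  assumes A: "positive X A" and c: "0 \<le> c"
  shows "positive X (\<lambda>s t. complex_of_real c * A s t)"
  unfolding positive_def
proof (intro conjI allI impI)
  show "is_op X (\<lambda>s t. complex_of_real c * A s t)" using positiveD(3)[OF A] unfolding is_op_def by auto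
  fix v assume v: "is_vec X v"
  obtain z where z: "qinner X v (mapply X A v) = complex_of_real z"
    using positiveD(1)[OF A v] by (auto elim: Reals_cases)
  have "qinner X v (mapply X (\<lambda>s t. complex_of_real c * A s t) v) = complex_of_real (c * z)"
    unfolding mapply_scale_op qinner_scale_right z by simp
  moreover have "0 \<le> z" using positiveD(2)[OF A v] z by simp
  ultimately show "qinner X v (mapply X (\<lambda>s t. complex_of_real c * A s t) v) \<in> \<real>"
    "0 \<le> Re (qinner X v (mapply X (\<lambda>s t. complex_of_real c * A s t) v))"
    using c by auto
qed

lemma positive_outer:
  assumes v: "is_vec X \<psi>"
  shows "positive X (outer \<psi> \<psi>)"
  unfolding positive_def
proof (intro conjI allI impI)
  show "is_op X (outer \<psi> \<psi>)" by (rule is_op_outer[OF v])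
  fix u assume u: "is_vec X u"
  have "qinner X u (mapply X (outer \<psi> \<psi>) u) = qinner X u \<psi> * qinner X \<psi> u"
    unfolding mapply_outer[OF v] qinner_scale_right by simp
  also have "\<dots> = complex_of_real ((cmod (qinner X \<psi> u))\<^sup>2)"
    using complex_norm_square[of "qinner X \<psi> u"] qinner_cnj[of X \<psi> u] by (simp add: mult.commute)
  finally show "qinner X u (mapply X (outer \<psi> \<psi>) u) \<in> \<real>" "0 \<le> Re (qinner X u (mapply X (outer \<psi> \<psi>) u))"
    by simp_all
qed

lemma positive_sandwich:
  assumes \<sigma>: "positive X \<sigma>" and C: "adj C = C"
  shows "positive X (mmult X (mmult X C \<sigma>) C)"
  unfolding positive_def
proof (intro conjI allI impI)
  show "is_op X (mmult X (mmult X C \<sigma>) C)" by simp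
  fix v assume v: "is_vec X v"
  have e: "qinner X v (mapply X (mmult X (mmult X C \<sigma>) C) v) = qinner X (mapply X C v) (mapply X \<sigma> (mapply X C v))"
    unfolding mapply_mmult by (subst qinner_mapply_adj) (simp add: C)
  show "qinner X v (mapply X (mmult X (mmult X C \<sigma>) C) v) \<in> \<real>"
    "0 \<le> Re (qinner X v (mapply X (mmult X (mmult X C \<sigma>) C) v))"
    unfolding e using positiveD(1,2)[OF \<sigma> is_vec_mapply] by auto
qed

section \<open>Subspaces and projectors\<close>

definition subsp :: "nat set \<Rightarrow> qvec set \<Rightarrow> bool" where
  "subsp X S \<longleftrightarrow> (\<forall>v\<in>S. is_vec X v) \<and> (\<lambda>s. 0) \<in> S \<and>
     (\<forall>a u v. u \<in> S \<longrightarrow> v \<in> S \<longrightarrow> (\<lambda>s. u s + a * v s) \<in> S)"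

lemma subspD:
  assumes "subsp X S"
  shows "v \<in> S \<Longrightarrow> is_vec X v" "(\<lambda>s. 0) \<in> S"
    "u \<in> S \<Longrightarrow> v \<in> S \<Longrightarrow> (\<lambda>s. u s + a * v s) \<in> S"
    "u \<in> S \<Longrightarrow> v \<in> S \<Longrightarrow> (\<lambda>s. u s - v s) \<in> S"
proof -
  note A = assms[unfolded subsp_def]
  show "v \<in> S \<Longrightarrow> is_vec X v" "(\<lambda>s. 0) \<in> S" "u \<in> S \<Longrightarrow> v \<in> S \<Longrightarrow> (\<lambda>s. u s + a * v s) \<in> S"
    using A by auto
  show "u \<in> S \<Longrightarrow> v \<in> S \<Longrightarrow> (\<lambda>s. u s - v s) \<in> S"
    using A[THEN conjunct2, THEN conjunct2, rule_format, of u v "-1"] by simp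
qed

lemma subspI:
  assumes "\<And>v. v \<in> S \<Longrightarrow> is_vec X v" "(\<lambda>s. 0) \<in> S"
    "\<And>a u v. u \<in> S \<Longrightarrow> v \<in> S \<Longrightarrow> (\<lambda>s. u s + a * v s) \<in> S"
  shows "subsp X S"
  unfolding subsp_def using assms by blast

lemma subsp_img: "subsp X (img X A)"
  by (rule subspI) (auto simp: img_def is_vec_def mapply_zero_vec mapply_add_vec mapply_scale_vec)

definition op_kernel :: "nat set \<Rightarrow> qop \<Rightarrow> qvec set" where
  "op_kernel X A = {\<psi>. is_vec X \<psi> \<and> mapply X A \<psi> = (\<lambda>s. 0)}"

definition op_range :: "nat set \<Rightarrow> qop \<Rightarrow> qvec set" where
  "op_range X A = {w. \<exists>v. is_vec X v \<and> w = mapply X A v}"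

lemma Nnull_positive:
  assumes "finite X" and "positive X N"
  shows "Nnull X N = op_kernel X N"
proof
  show "Nnull X N \<subseteq> op_kernel X N"
    unfolding Nnull_def op_kernel_def using positive_mapply_zero[OF assms] by blast
  have "qinner X \<psi> (\<lambda>s. 0) = 0" for \<psi> unfolding qinner_def by simp
  thus "op_kernel X N \<subseteq> Nnull X N"
    unfolding Nnull_def op_kernel_def by auto
qed

lemma subsp_op_kernel: "subsp X (op_kernel X A)"
  by (rule subspI) (auto simp: op_kernel_def is_vec_def mapply_zero_vec mapply_add_vec mapply_scale_vec)

lemma subsp_op_range: "subsp X (op_range X A)"
proof (rule subspI)
  show "(\<lambda>s. 0) \<in> op_range X A"
    unfolding op_range_def using mapply_zero_vec[of X A] by (force simp: is_vec_def)
  fix a u v assume "u \<in> op_range X A" "v \<in> op_range X A"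
  then obtain u' v' where "is_vec X u'" "u = mapply X A u'" "is_vec X v'" "v = mapply X A v'"
    unfolding op_range_def by auto
  thus "(\<lambda>s. u s + a * v s) \<in> op_range X A"
    unfolding op_range_def by (intro CollectI exI[of _ "\<lambda>s. u' s + a * v' s"])
      (simp add: is_vec_lin mapply_add_vec mapply_scale_vec)
qed (auto simp: op_range_def)

definition supported :: "qvec set \<Rightarrow> nat set set \<Rightarrow> qvec set" where
  "supported S C = {v\<in>S. \<forall>s. v s \<noteq> 0 \<longrightarrow> s \<in> C}"

lemma subsp_supported:
  assumes S: "subsp X S"
  shows "subsp X (supported S C)"
proof (rule subspI)
  fix a u v assume u: "u \<in> supported S C" and v: "v \<in> supported S C"
  have "(\<lambda>s. u s + a * v s) \<in> S" using u v subspD(3)[OF S] unfolding supported_def by blast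
  moreover have "s \<in> C" if "u s + a * v s \<noteq> 0" for s
  proof -
    from that have "u s \<noteq> 0 \<or> v s \<noteq> 0" by auto
    thus ?thesis using u v unfolding supported_def by blast
  qed
  ultimately show "(\<lambda>s. u s + a * v s) \<in> supported S C" unfolding supported_def by blast
qed (use subspD(1,2)[OF S] in \<open>auto simp: supported_def\<close>)

lemma supported_insert:
  assumes S: "subsp X S" and w: "w \<in> supported S (insert t C)" "w t \<noteq> 0"
  shows "supported S (insert t C) = {\<lambda>s. x s + a * w s | x a. x \<in> supported S C}"
proof
  show "{\<lambda>s. x s + a * w s | x a. x \<in> supported S C} \<subseteq> supported S (insert t C)"
  proof clarify
    fix x a assume "x \<in> supported S C"
    hence "x \<in> supported S (insert t C)" unfolding supported_def by auto
    thus "(\<lambda>s. x s + a * w s) \<in> supported S (insert t C)" by (rule subspD(3)[OF subsp_supported[OF S] _ w(1)])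
  qed
next
  show "supported S (insert t C) \<subseteq> {\<lambda>s. x s + a * w s | x a. x \<in> supported S C}"
  proof
    fix v assume v: "v \<in> supported S (insert t C)"
    define a where "a = v t / w t"
    have "(\<lambda>s. v s + (- a) * w s) \<in> supported S (insert t C)" by (rule subspD(3)[OF subsp_supported[OF S] v w(1)])
    moreover have "v t + (- a) * w t = 0" unfolding a_def using w(2) by simp
    ultimately have "(\<lambda>s. v s + (- a) * w s) \<in> supported S C" unfolding supported_def by auto
    thus "v \<in> {\<lambda>s. x s + a * w s | x a. x \<in> supported S C}"
      by (intro CollectI exI[of _ "\<lambda>s. v s + (- a) * w s"] exI[of _ a] conjI) auto
  qed
qed

lemma projectorD:
  assumes "projector X P"
  shows "is_op X P" "mmult X P P = P" "adj P = P"
  using assms unfolding projector_def by auto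

lemma mapply_in_img:
  assumes "projector X P" shows "mapply X P v \<in> img X P"
  unfolding img_def using projectorD[OF assms] by (simp flip: mapply_mmult)

lemma column_in_img: "projector X P \<Longrightarrow> t \<subseteq> X \<Longrightarrow> column X P t \<in> img X P"
  using mapply_in_img[of X P "column X P t"] mapply_column[of t X P P] projectorD(2)[of X P] by simp

lemma mmult_eq_right_of_img:
  assumes "projector X P" and "img X P \<subseteq> img X A"
  shows "mmult X A P = P"
proof (rule mmult_eq_right_column[OF projectorD(1)[OF assms(1)]])
  fix t assume "t \<subseteq> X"
  hence "column X P t \<in> img X A" using column_in_img[OF assms(1)] assms(2) by blast
  thus "mapply X A (column X P t) = column X P t" unfolding img_def by simp
qed

lemma mmult_eq_zero_of_img:
  assumes "projector X P" and "img X P \<subseteq> op_kernel X A"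
  shows "mmult X A P = (\<lambda>s t. 0)"
proof (rule mmult_eq_zero_column)
  fix t assume "t \<subseteq> X"
  hence "column X P t \<in> op_kernel X A" using column_in_img[OF assms(1)] assms(2) by blast
  thus "mapply X A (column X P t) = (\<lambda>s. 0)" unfolding op_kernel_def by simp
qed

lemma projector_eqI_img:
  assumes P: "projector X P" and P': "projector X P'" and I: "img X P = img X P'"
  shows "P = P'"
proof -
  have "P = adj P" using projectorD(3)[OF P] by simp
  also have "\<dots> = adj (mmult X P' P)" using mmult_eq_right_of_img[OF P] I by simp
  also have "\<dots> = mmult X P P'" by (simp add: adj_mmult projectorD(3)[OF P] projectorD(3)[OF P'])
  also have "\<dots> = P'" using mmult_eq_right_of_img[OF P'] I by simp
  finally show ?thesis .
qed

lemma projector_positive: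
  assumes P: "projector X P" shows "positive X P"
proof -
  have eq: "qinner X v (mapply X P v) = qinner X (mapply X P v) (mapply X P v)" for v
  proof -
    have "qinner X v (mapply X P v) = qinner X v (mapply X P (mapply X P v))"
      by (simp flip: mapply_mmult add: projectorD(2)[OF P])
    also have "\<dots> = qinner X (mapply X P v) (mapply X P v)"
      by (subst qinner_mapply_adj) (simp add: projectorD(3)[OF P])
    finally show ?thesis .
  qed
  show ?thesis unfolding positive_def eq
    using projectorD(1)[OF P] qinner_self_nonneg by (simp add: qinner_self_real)
qed

lemma projector_zero: "projector X (\<lambda>s t. 0)"
  unfolding projector_def is_op_def adj_def mmult_def by (auto intro!: ext)

lemma img_zero: "img X (\<lambda>s t. 0) = {\<lambda>s. 0}"
  unfolding img_def by (auto simp: mapply_zero_op is_vec_def)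

lemma projector_idop: "finite X \<Longrightarrow> projector X (idop X)"
  unfolding projector_def by (simp add: mmult_idop_left)

lemma proj_compl_eq: "is_op X P \<Longrightarrow> proj_compl X P = (\<lambda>s t. idop X s t - P s t)"
  unfolding proj_compl_def idop_def is_op_def by (intro ext) auto

lemma mapply_proj_compl:
  "finite X \<Longrightarrow> is_op X P \<Longrightarrow> is_vec X v \<Longrightarrow> mapply X (proj_compl X P) v = (\<lambda>s. v s - mapply X P v s)"
  unfolding proj_compl_eq mapply_diff_op by (simp add: mapply_idop)

lemma projector_proj_compl:
  assumes fin: "finite X" and P: "projector X P"
  shows "projector X (proj_compl X P)"
proof -
  note PD = projectorD[OF P]
  have "mmult X (\<lambda>s t. idop X s t - P s t) (\<lambda>s t. idop X s t - P s t) = (\<lambda>s t. idop X s t - P s t)"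
    unfolding mmult_diff_left mmult_diff_right mmult_idop_left[OF fin is_op_idop] mmult_idop_left[OF fin PD(1)]
      mmult_idop_right[OF fin PD(1)] PD(2) by simp
  thus ?thesis unfolding projector_def proj_compl_eq[OF PD(1)]
    using adj_idop_diff[OF PD(3)] is_op_diff[OF is_op_idop PD(1)] by simp
qed

lemma qtrace_projector_sandwich:
  assumes P: "projector X P"
  shows "qtrace X (mmult X P \<sigma>) = qtrace X (mmult X (mmult X (adj P) \<sigma>) P)"
proof -
  note PD = projectorD[OF P]
  have "qtrace X (mmult X P \<sigma>) = qtrace X (mmult X (mmult X P P) \<sigma>)" using PD by simp
  also have "\<dots> = qtrace X (mmult X (mmult X P \<sigma>) P)"
    by (simp add: mmult_assoc qtrace_mmult_comm[of X P])
  also have "\<dots> = qtrace X (mmult X (mmult X (adj P) \<sigma>) P)" using PD by simp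
  finally show ?thesis .
qed

lemma qtrace_projector_nonneg:
  assumes "projector X P" and "positive X \<sigma>"
  shows "qtrace X (mmult X P \<sigma>) \<in> \<real>" "0 \<le> Re (qtrace X (mmult X P \<sigma>))"
  unfolding qtrace_projector_sandwich[OF assms(1)] using qtrace_sandwich_nonneg[OF assms(2)] by auto

lemma projector_add_outer:
  assumes fin: "finite X" and P: "projector X P" and w: "is_vec X w" "w \<noteq> (\<lambda>s. 0)"
    and Pw: "mapply X P w = (\<lambda>s. 0)"
  shows "projector X (\<lambda>s t. P s t + (1 / qinner X w w) * outer w w s t)"
proof -
  note PD = projectorD[OF P]
  define nw where "nw = qinner X w w"
  define P' where "P' = (\<lambda>s t. P s t + (1 / nw) * outer w w s t)"
  have nw0: "nw \<noteq> 0" using qinner_self_zero[OF fin w(1)] w(2) unfolding nw_def by blast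
  have zero_outer: "outer (\<lambda>s. 0) w = (\<lambda>s t. 0)" "outer w (\<lambda>s. 0) = (\<lambda>s t. 0)"
    unfolding outer_def by auto
  have PW: "mmult X P (outer w w) = (\<lambda>s t. 0)" using mmult_outer_left[OF w(1)] Pw zero_outer by simp
  have WP: "mmult X (outer w w) P = (\<lambda>s t. 0)" using mmult_outer_right[OF w(1)] Pw zero_outer PD by simp
  have "mmult X P' P' = (\<lambda>s t. mmult X P P s t + (1/nw) * mmult X P (outer w w) s t
       + ((1/nw) * mmult X (outer w w) P s t + (1/nw) * ((1/nw) * mmult X (outer w w) (outer w w) s t)))"
    unfolding P'_def mmult_add_left mmult_add_right mmult_scale_left mmult_scale_right by simp
  also have "\<dots> = P'" unfolding PW WP mmult_outer_outer[OF w(1)] PD(2) P'_def nw_def[symmetric]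
    using nw0 by (intro ext) (simp add: field_simps)
  finally have idem: "mmult X P' P' = P'" .
  have herm: "adj P' = P'"
  proof (intro ext)
    fix s t
    have "cnj (P t s) = P s t" using fun_cong[OF fun_cong[OF PD(3)], of s t] unfolding adj_def .
    moreover have "cnj nw = nw" unfolding nw_def by (simp add: qinner_self_real)
    ultimately show "adj P' s t = P' s t" unfolding P'_def adj_def outer_def by (simp add: mult.commute)
  qed
  have "is_op X P'" unfolding P'_def using PD(1) is_op_outer[OF w(1)] by (auto simp: is_op_def)
  thus ?thesis unfolding projector_def using idem herm by (simp add: P'_def nw_def)
qed

lemma img_projector_add_outer:
  assumes fin: "finite X" and P: "projector X P" and w: "is_vec X w" "w \<noteq> (\<lambda>s. 0)"
    and Pw: "mapply X P w = (\<lambda>s. 0)"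
  shows "img X (\<lambda>s t. P s t + (1 / qinner X w w) * outer w w s t) = {\<lambda>s. u s + a * w s | u a. u \<in> img X P}"
    (is "img X ?P' = _")
proof
  have nw0: "qinner X w w \<noteq> 0" using qinner_self_zero[OF fin w(1)] w(2) by blast
  have mP': "mapply X ?P' v = (\<lambda>s. mapply X P v s + (qinner X w v / qinner X w w) * w s)" for v
    unfolding mapply_add_op mapply_scale_op mapply_outer[OF w(1)] by simp
  show "img X ?P' \<subseteq> {\<lambda>s. u s + a * w s | u a. u \<in> img X P}"
  proof
    fix v assume "v \<in> img X ?P'"
    hence "v = (\<lambda>s. mapply X P v s + (qinner X w v / qinner X w w) * w s)" unfolding img_def mP' by simp
    thus "v \<in> {\<lambda>s. u s + a * w s | u a. u \<in> img X P}" using mapply_in_img[OF P] by blast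
  qed
  show "{\<lambda>s. u s + a * w s | u a. u \<in> img X P} \<subseteq> img X ?P'"
  proof clarify
    fix u a assume u: "u \<in> img X P"
    hence uv: "is_vec X u" and Pu: "mapply X P u = u" unfolding img_def by auto
    have wu: "qinner X w u = 0"
      using qinner_mapply_adj[of X w P u] Pu Pw projectorD(3)[OF P] by (simp add: qinner_def)
    have "mapply X ?P' (\<lambda>s. u s + a * w s) = (\<lambda>s. u s + a * w s)"
      unfolding mP' mapply_add_vec mapply_scale_vec Pu Pw qinner_add_right qinner_scale_right wu
      using nw0 by simp
    thus "(\<lambda>s. u s + a * w s) \<in> img X ?P'" unfolding img_def using is_vec_lin[OF uv w(1)] by simp
  qed
qed

lemma projector_onto_supported:
  assumes fin: "finite X" and S: "subsp X S" and C: "finite C"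
  shows "\<exists>P. projector X P \<and> img X P = supported S C"
  using C
proof (induction C rule: finite_induct)
  case empty
  have "supported S {} = {\<lambda>s. 0}" using subspD(2)[OF S] unfolding supported_def by auto
  thus ?case using projector_zero img_zero by metis
next
  case (insert t C)
  from insert obtain P where P: "projector X P" and IP: "img X P = supported S C" by auto
  show ?case
  proof (cases "\<forall>v\<in>supported S (insert t C). v t = 0")
    case True
    hence "supported S (insert t C) = supported S C" unfolding supported_def by auto
    thus ?thesis using P IP by auto
  next
    case False
    then obtain u where u: "u \<in> supported S (insert t C)" and ut: "u t \<noteq> 0" by auto
    \<comment> \<open>Gram--Schmidt step: the component of \<open>u\<close> orthogonal to \<open>img P\<close> extends \<open>P\<close>\<close>
    define w where "w = (\<lambda>s. u s - mapply X P u s)"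
    have Pu: "mapply X P u \<in> supported S C" using mapply_in_img[OF P] IP by blast
    hence "mapply X P u \<in> supported S (insert t C)" unfolding supported_def by auto
    hence wS: "w \<in> supported S (insert t C)" unfolding w_def by (rule subspD(4)[OF subsp_supported[OF S] u])
    have "mapply X P u t = 0" using Pu insert(2) unfolding supported_def by auto
    hence wt: "w t \<noteq> 0" unfolding w_def using ut by simp
    have Pw: "mapply X P w = (\<lambda>s. 0)"
      unfolding w_def mapply_diff_vec by (simp flip: mapply_mmult add: projectorD(2)[OF P])
    have wv: "is_vec X w" using subspD(1)[OF subsp_supported[OF S] wS] .
    have w0: "w \<noteq> (\<lambda>s. 0)" using wt by auto
    have "supported S (insert t C) = img X (\<lambda>s t. P s t + (1 / qinner X w w) * outer w w s t)"
      unfolding supported_insert[OF S wS wt] img_projector_add_outer[OF fin P wv w0 Pw] IP ..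
    thus ?thesis using projector_add_outer[OF fin P wv w0 Pw] by blast
  qed
qed

lemma projector_onto_subspace:
  assumes fin: "finite X" and S: "subsp X S"
  shows "\<exists>P. projector X P \<and> img X P = S"
proof -
  have "supported S (Pow X) = S"
    using subspD(1)[OF S] unfolding is_vec_def supported_def by auto
  thus ?thesis using projector_onto_supported[OF fin S, of "Pow X"] fin by auto
qed

section \<open>Splitting off a subsystem\<close>

lemma Pow_eq_image_Un:
  assumes "B \<subseteq> X"
  shows "Pow X = (\<lambda>(s,c). s \<union> c) ` (Pow B \<times> Pow (X - B))"
proof
  show "Pow X \<subseteq> (\<lambda>(s,c). s \<union> c) ` (Pow B \<times> Pow (X - B))"
  proof
    fix u assume "u \<in> Pow X"
    hence "u = (\<lambda>(s,c). s \<union> c) (u \<inter> B, u - B)" "(u \<inter> B, u - B) \<in> Pow B \<times> Pow (X - B)" by auto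
    thus "u \<in> (\<lambda>(s,c). s \<union> c) ` (Pow B \<times> Pow (X - B))" by blast
  qed
qed (use assms in auto)

lemma inj_on_Un_Pow:
  "inj_on (\<lambda>(s,c). s \<union> c) (Pow B \<times> Pow (X - B))"
proof (rule inj_onI, clarify)
  fix s c s' c'
  assume h: "s \<subseteq> B" "c \<subseteq> X - B" "s' \<subseteq> B" "c' \<subseteq> X - B" "s \<union> c = s' \<union> c'"
  have "s = (s \<union> c) \<inter> B" "s' = (s' \<union> c') \<inter> B" "c = (s \<union> c) - B" "c' = (s' \<union> c') - B" using h by auto
  thus "s = s' \<and> c = c'" using h(5) by metis
qed

lemma sum_Pow_split:
  assumes fin: "finite X" and B: "B \<subseteq> X"
  shows "(\<Sum>u\<in>Pow X. f u) = (\<Sum>c\<in>Pow (X - B). \<Sum>s\<in>Pow B. f (s \<union> c))"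
proof -
  have "(\<Sum>u\<in>Pow X. f u) = (\<Sum>p\<in>Pow B \<times> Pow (X - B). f ((\<lambda>(s,c). s \<union> c) p))"
    unfolding Pow_eq_image_Un[OF B] by (rule sum.reindex[OF inj_on_Un_Pow, unfolded comp_def])
  also have "\<dots> = (\<Sum>s\<in>Pow B. \<Sum>c\<in>Pow (X - B). f (s \<union> c))"
    by (subst sum.cartesian_product) (simp add: case_prod_beta)
  also have "\<dots> = (\<Sum>c\<in>Pow (X - B). \<Sum>s\<in>Pow B. f (s \<union> c))"
    by (rule sum.swap)
  finally show ?thesis .
qed

lemma Un_split_parts:
  assumes "s \<subseteq> B" "c \<subseteq> X - B" "B \<subseteq> X"
  shows "(s \<union> c) \<inter> B = s" "(s \<union> c) - B = c" "s \<union> c \<subseteq> X"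
  using assms by auto

text \<open>\<open>block_op B a b \<rho>\<close> is the block \<open>\<langle>a| \<rho> |b\<rangle>\<close> of \<open>\<rho>\<close> with respect to \<open>H\<^sub>X = H\<^sub>B \<otimes> H\<^bsub>X - B\<^esub>\<close>;
  \<open>lift_vec Y X c v\<close> below is \<open>v \<otimes> |c\<rangle>\<close>.\<close>

definition block_op :: "nat set \<Rightarrow> nat set \<Rightarrow> nat set \<Rightarrow> qop \<Rightarrow> qop" where
  "block_op B a b \<rho> = (\<lambda>s t. if s \<subseteq> B \<and> t \<subseteq> B then \<rho> (s \<union> a) (t \<union> b) else 0)"

lemma is_op_block_op[simp]: "is_op B (block_op B a b \<rho>)"
  unfolding is_op_def block_op_def by auto

lemma sext_block_op: "sext V X E \<rho> = (\<lambda>s t. if s \<subseteq> X \<and> t \<subseteq> X then E (block_op V (s - V) (t - V) \<rho>) (s \<inter> V) (t \<inter> V) else 0)"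
  unfolding sext_def block_op_def by simp

lemma is_op_ext[simp]: "is_op X (ext Y X A)"
  unfolding is_op_def ext_def by auto

lemma is_op_sext[simp]: "is_op X (sext V X E \<rho>)"
  unfolding is_op_def sext_def by auto

lemma ext_split:
  assumes "s \<subseteq> Y" "c \<subseteq> X - Y" "t \<subseteq> Y" "d \<subseteq> X - Y" "Y \<subseteq> X"
  shows "ext Y X A (s \<union> c) (t \<union> d) = (if c = d then A s t else 0)"
  using Un_split_parts[OF assms(1,2,5)] Un_split_parts[OF assms(3,4,5)] unfolding ext_def by auto

lemma qtrace_block_sum:
  assumes fin: "finite X" and Y: "Y \<subseteq> X"
  shows "qtrace X \<sigma> = (\<Sum>c\<in>Pow (X - Y). qtrace Y (block_op Y c c \<sigma>))"
  unfolding qtrace_def sum_Pow_split[OF fin Y]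
  by (intro sum.cong refl) (auto simp: block_op_def)

lemma qtrace_ext_mmult_block_sum:
  assumes fin: "finite X" and Y: "Y \<subseteq> X"
  shows "qtrace X (mmult X (ext Y X A) \<sigma>) = (\<Sum>c\<in>Pow (X - Y). qtrace Y (mmult Y A (block_op Y c c \<sigma>)))"
  unfolding qtrace_def sum_Pow_split[OF fin Y]
proof (intro sum.cong refl)
  fix c s assume c: "c \<in> Pow (X - Y)" and s: "s \<in> Pow Y"
  have finY: "finite (Pow (X - Y))" using fin by simp
  have "mmult X (ext Y X A) \<sigma> (s \<union> c) (s \<union> c) = (\<Sum>u\<in>Pow X. ext Y X A (s \<union> c) u * \<sigma> u (s \<union> c))"
    using Un_split_parts[of s Y c X] c s Y by (simp add: mmult_eq)
  also have "\<dots> = (\<Sum>d\<in>Pow (X - Y). \<Sum>t\<in>Pow Y. ext Y X A (s \<union> c) (t \<union> d) * \<sigma> (t \<union> d) (s \<union> c))"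
    by (rule sum_Pow_split[OF fin Y])
  also have "\<dots> = (\<Sum>d\<in>Pow (X - Y). if d = c then (\<Sum>t\<in>Pow Y. A s t * \<sigma> (t \<union> c) (s \<union> c)) else 0)"
    by (intro sum.cong refl) (use c s Y in \<open>auto simp: ext_split\<close>)
  also have "\<dots> = (\<Sum>t\<in>Pow Y. A s t * \<sigma> (t \<union> c) (s \<union> c))"
    using c finY by (simp add: sum.delta)
  also have "\<dots> = mmult Y A (block_op Y c c \<sigma>) s s"
    using s by (simp add: mmult_eq block_op_def)
  finally show "mmult X (ext Y X A) \<sigma> (s \<union> c) (s \<union> c) = mmult Y A (block_op Y c c \<sigma>) s s" .
qed

lemma DProgD:
  assumes "DProg V E"
  shows "is_op V A \<Longrightarrow> is_op V (E A)"
    "is_op V A \<Longrightarrow> is_op V B \<Longrightarrow> E (\<lambda>s t. A s t + B s t) = (\<lambda>s t. E A s t + E B s t)"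
    "is_op V A \<Longrightarrow> E (\<lambda>s t. c * A s t) = (\<lambda>s t. c * E A s t)"
    "finite X \<Longrightarrow> V \<subseteq> X \<Longrightarrow> positive X \<rho> \<Longrightarrow> positive X (sext V X E \<rho>)"
    "positive V \<rho> \<Longrightarrow> Re (qtrace V (E \<rho>)) \<le> Re (qtrace V \<rho>)"
proof -
  note d = assms[unfolded DProg_def]
  show "is_op V A \<Longrightarrow> is_op V (E A)" using d[THEN conjunct1] by blast
  show "is_op V A \<Longrightarrow> is_op V B \<Longrightarrow> E (\<lambda>s t. A s t + B s t) = (\<lambda>s t. E A s t + E B s t)"
    using d[THEN conjunct2, THEN conjunct1] by blast
  show "is_op V A \<Longrightarrow> E (\<lambda>s t. c * A s t) = (\<lambda>s t. c * E A s t)"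
    using d[THEN conjunct2, THEN conjunct2, THEN conjunct1] by blast
  show "finite X \<Longrightarrow> V \<subseteq> X \<Longrightarrow> positive X \<rho> \<Longrightarrow> positive X (sext V X E \<rho>)"
    using d[THEN conjunct2, THEN conjunct2, THEN conjunct2, THEN conjunct1] by blast
  show "positive V \<rho> \<Longrightarrow> Re (qtrace V (E \<rho>)) \<le> Re (qtrace V \<rho>)"
    using d[THEN conjunct2, THEN conjunct2, THEN conjunct2, THEN conjunct2] by blast
qed

lemma block_op_sext:
  assumes VY: "V \<subseteq> Y" and YX: "Y \<subseteq> X" and c: "c \<subseteq> X - Y"
  shows "block_op Y c c (sext V X E \<rho>) = sext V Y E (block_op Y c c \<rho>)"
proof (intro ext)
  fix s t
  show "block_op Y c c (sext V X E \<rho>) s t = sext V Y E (block_op Y c c \<rho>) s t"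
  proof (cases "s \<subseteq> Y \<and> t \<subseteq> Y")
    case True
    have i1: "(s \<union> c) \<inter> V = s \<inter> V" "(t \<union> c) \<inter> V = t \<inter> V" using c VY by auto
    have i2: "(s \<union> c) - V = (s - V) \<union> c" "(t \<union> c) - V = (t - V) \<union> c" using c VY by auto
    have i3: "s \<union> c \<subseteq> X" "t \<union> c \<subseteq> X" using True c YX by auto
    have b: "block_op V (s - V \<union> c) (t - V \<union> c) \<rho> = block_op V (s - V) (t - V) (block_op Y c c \<rho>)"
    proof (intro ext)
      fix s' t'
      show "block_op V (s - V \<union> c) (t - V \<union> c) \<rho> s' t' = block_op V (s - V) (t - V) (block_op Y c c \<rho>) s' t'"
      proof (cases "s' \<subseteq> V \<and> t' \<subseteq> V")
        case True
        hence "s' \<union> (s - V) \<subseteq> Y \<and> t' \<union> (t - V) \<subseteq> Y" using \<open>s \<subseteq> Y \<and> t \<subseteq> Y\<close> VY by blast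
        thus ?thesis using True unfolding block_op_def by (simp add: Un_assoc)
      next
        case False thus ?thesis unfolding block_op_def by (simp only: if_not_P if_False)
      qed
    qed
    have "block_op Y c c (sext V X E \<rho>) s t = sext V X E \<rho> (s \<union> c) (t \<union> c)"
      using True unfolding block_op_def by (simp only: if_P)
    also have "\<dots> = E (block_op V ((s \<union> c) - V) ((t \<union> c) - V) \<rho>) ((s \<union> c) \<inter> V) ((t \<union> c) \<inter> V)"
      using i3 unfolding sext_block_op by (simp only: if_P conj_absorb simp_thms)
    also have "\<dots> = E (block_op V (s - V) (t - V) (block_op Y c c \<rho>)) (s \<inter> V) (t \<inter> V)"
      unfolding i1 i2 b ..
    also have "\<dots> = sext V Y E (block_op Y c c \<rho>) s t"
      using True unfolding sext_block_op by (simp only: if_P)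
    finally show ?thesis .
  next
    case False
    have 1: "block_op Y c c (sext V X E \<rho>) s t = 0" using False unfolding block_op_def by (simp only: if_not_P if_False)
    have 2: "sext V Y E (block_op Y c c \<rho>) s t = 0" using False unfolding sext_block_op by (simp only: if_not_P if_False)
    show ?thesis using 1 2 by simp
  qed
qed

definition lift_vec :: "nat set \<Rightarrow> nat set \<Rightarrow> nat set \<Rightarrow> qvec \<Rightarrow> qvec" where
  "lift_vec Y X c v = (\<lambda>u. if u \<subseteq> X \<and> u - Y = c then v (u \<inter> Y) else 0)"

lemma lift_vec_Un:
  assumes "s \<subseteq> Y" "d \<subseteq> X - Y" "Y \<subseteq> X"
  shows "lift_vec Y X c v (s \<union> d) = (if d = c then v s else 0)"
  using Un_split_parts[OF assms] unfolding lift_vec_def by auto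

lemma is_vec_lift_vec: "is_vec X (lift_vec Y X c v)"
  unfolding is_vec_def lift_vec_def by auto

lemma qinner_lift_vec:
  assumes fin: "finite X" and YX: "Y \<subseteq> X" and c: "c \<subseteq> X - Y"
  shows "qinner X (lift_vec Y X c v) w = (\<Sum>s\<in>Pow Y. cnj (v s) * w (s \<union> c))"
proof -
  have "qinner X (lift_vec Y X c v) w = (\<Sum>d\<in>Pow (X - Y). \<Sum>s\<in>Pow Y. cnj (lift_vec Y X c v (s \<union> d)) * w (s \<union> d))"
    unfolding qinner_def by (rule sum_Pow_split[OF fin YX])
  also have "\<dots> = (\<Sum>d\<in>Pow (X - Y). if d = c then (\<Sum>s\<in>Pow Y. cnj (v s) * w (s \<union> c)) else 0)"
    by (intro sum.cong refl) (auto simp: lift_vec_Un[OF _ _ YX])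
  also have "\<dots> = (\<Sum>s\<in>Pow Y. cnj (v s) * w (s \<union> c))" using c fin by (simp add: sum.delta)
  finally show ?thesis .
qed

lemma mapply_lift_vec:
  assumes fin: "finite X" and YX: "Y \<subseteq> X" and c: "c \<subseteq> X - Y" and s: "s \<subseteq> Y"
  shows "mapply X \<rho> (lift_vec Y X c v) (s \<union> c) = mapply Y (block_op Y c c \<rho>) v s"
proof -
  have "s \<union> c \<subseteq> X" using s c YX by auto
  hence "mapply X \<rho> (lift_vec Y X c v) (s \<union> c)
      = (\<Sum>d\<in>Pow (X - Y). \<Sum>t\<in>Pow Y. \<rho> (s \<union> c) (t \<union> d) * lift_vec Y X c v (t \<union> d))"
    by (simp add: mapply_eq sum_Pow_split[OF fin YX])
  also have "\<dots> = (\<Sum>d\<in>Pow (X - Y). if d = c then (\<Sum>t\<in>Pow Y. \<rho> (s \<union> c) (t \<union> c) * v t) else 0)"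
    by (intro sum.cong refl) (auto simp: lift_vec_Un[OF _ _ YX])
  also have "\<dots> = (\<Sum>t\<in>Pow Y. \<rho> (s \<union> c) (t \<union> c) * v t)" using c fin by (simp add: sum.delta)
  also have "\<dots> = mapply Y (block_op Y c c \<rho>) v s" using s by (simp add: mapply_eq block_op_def)
  finally show ?thesis .
qed

lemma positive_block_op:
  assumes fin: "finite X" and YX: "Y \<subseteq> X" and c: "c \<subseteq> X - Y" and P: "positive X \<rho>"
  shows "positive Y (block_op Y c c \<rho>)"
proof -
  have "qinner Y v (mapply Y (block_op Y c c \<rho>) v) = qinner X (lift_vec Y X c v) (mapply X \<rho> (lift_vec Y X c v))" for v
    unfolding qinner_lift_vec[OF fin YX c] unfolding qinner_def
    by (intro sum.cong refl) (simp add: mapply_lift_vec[OF fin YX c])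
  thus ?thesis unfolding positive_def using positiveD(1,2)[OF P is_vec_lift_vec] by auto
qed

lemma sext_self:
  assumes D: "DProg V E" and A: "is_op V A"
  shows "sext V V E A = E A"
proof (intro ext)
  fix s t
  show "sext V V E A s t = E A s t"
  proof (cases "s \<subseteq> V \<and> t \<subseteq> V")
    case True
    have e: "s - V = {}" "t - V = {}" using True by auto
    have "block_op V (s - V) (t - V) A = A" unfolding e using A unfolding block_op_def is_op_def by (intro ext) auto
    thus ?thesis using True by (simp add: sext_block_op Int_absorb2)
  next
    case False
    thus ?thesis using DProgD(1)[OF D A] by (auto simp: sext_block_op is_op_def)
  qed
qed

lemma ext_self: "is_op Y A \<Longrightarrow> ext Y Y A = A"
  unfolding ext_def is_op_def by (intro ext) (auto simp: Int_absorb2)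

lemma qtrace_sext_le:
  assumes fin: "finite X" and D: "DProg V E" and VX: "V \<subseteq> X" and P: "positive X \<rho>"
  shows "Re (qtrace X (sext V X E \<rho>)) \<le> Re (qtrace X \<rho>)"
proof -
  have "Re (qtrace X (sext V X E \<rho>)) = (\<Sum>c\<in>Pow (X - V). Re (qtrace V (block_op V c c (sext V X E \<rho>))))"
    unfolding qtrace_block_sum[OF fin VX] by simp
  also have "\<dots> = (\<Sum>c\<in>Pow (X - V). Re (qtrace V (E (block_op V c c \<rho>))))"
    by (intro sum.cong refl) (simp add: block_op_sext[OF order_refl VX] sext_self[OF D])
  also have "\<dots> \<le> (\<Sum>c\<in>Pow (X - V). Re (qtrace V (block_op V c c \<rho>)))"
    by (intro sum_mono DProgD(5)[OF D] positive_block_op[OF fin VX _ P]) auto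
  also have "\<dots> = Re (qtrace X \<rho>)"
    unfolding qtrace_block_sum[OF fin VX] by simp
  finally show ?thesis .
qed

lemma ext_Un_right:
  assumes "s \<subseteq> X" "u \<subseteq> Y" "d \<subseteq> X - Y" "Y \<subseteq> X"
  shows "ext Y X A s (u \<union> d) = (if s - Y = d then A (s \<inter> Y) u else 0)"
  using Un_split_parts[OF assms(2,3,4)] assms(1) unfolding ext_def by auto

lemma ext_Un_left:
  assumes "t \<subseteq> X" "u \<subseteq> Y" "d \<subseteq> X - Y" "Y \<subseteq> X"
  shows "ext Y X A (u \<union> d) t = (if d = t - Y then A u (t \<inter> Y) else 0)"
  using Un_split_parts[OF assms(2,3,4)] assms(1) unfolding ext_def by auto

lemma ext_mmult:
  assumes fin: "finite X" and YX: "Y \<subseteq> X"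
  shows "ext Y X (mmult Y A B) = mmult X (ext Y X A) (ext Y X B)"
proof (intro ext)
  fix s t
  show "ext Y X (mmult Y A B) s t = mmult X (ext Y X A) (ext Y X B) s t"
  proof (cases "s \<subseteq> X \<and> t \<subseteq> X")
    case True
    have finP: "finite (Pow (X - Y))" using fin by simp
    have sd: "s - Y \<in> Pow (X - Y)" using True by auto
    have "mmult X (ext Y X A) (ext Y X B) s t = (\<Sum>u\<in>Pow X. ext Y X A s u * ext Y X B u t)"
      using True by (simp add: mmult_eq)
    also have "\<dots> = (\<Sum>d\<in>Pow (X - Y). \<Sum>u\<in>Pow Y. ext Y X A s (u \<union> d) * ext Y X B (u \<union> d) t)"
      by (rule sum_Pow_split[OF fin YX])
    also have "\<dots> = (\<Sum>d\<in>Pow (X - Y). if s - Y = d then (\<Sum>u\<in>Pow Y. A (s \<inter> Y) u * (if s - Y = t - Y then B u (t \<inter> Y) else 0)) else 0)"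
      by (intro sum.cong refl) (use True YX in \<open>auto simp: ext_Un_right ext_Un_left\<close>)
    also have "\<dots> = (\<Sum>u\<in>Pow Y. A (s \<inter> Y) u * (if s - Y = t - Y then B u (t \<inter> Y) else 0))"
      using finP sd by (simp add: sum.delta)
    also have "\<dots> = ext Y X (mmult Y A B) s t"
      using True unfolding ext_def by (auto simp: mmult_eq)
    finally show ?thesis ..
  next
    case False
    thus ?thesis unfolding ext_def mmult_def by auto
  qed
qed

lemma adj_ext: "adj (ext Y X A) = ext Y X (adj A)"
  unfolding adj_def ext_def by (intro ext) auto

lemma ext_lin: "ext Y X (\<lambda>s t. A s t + c * B s t) = (\<lambda>s t. ext Y X A s t + c * ext Y X B s t)"
  unfolding ext_def by (intro ext) auto

lemma ext_diff: "ext Y X (\<lambda>s t. A s t - B s t) = (\<lambda>s t. ext Y X A s t - ext Y X B s t)"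
  unfolding ext_def by (intro ext) auto

lemma ext_idop: "Y \<subseteq> X \<Longrightarrow> ext Y X (idop Y) = idop X"
proof (intro ext)
  fix s t assume YX: "Y \<subseteq> X"
  have "s \<subseteq> X \<Longrightarrow> t \<subseteq> X \<Longrightarrow> s - Y = t - Y \<Longrightarrow> s \<inter> Y = t \<inter> Y \<Longrightarrow> s = t" by blast
  thus "ext Y X (idop Y) s t = idop X s t" unfolding ext_def idop_def by auto
qed

lemma projector_ext:
  assumes fin: "finite X" and YX: "Y \<subseteq> X" and P: "projector Y P"
  shows "projector X (ext Y X P)"
  unfolding projector_def
  using projectorD[OF P] by (simp add: ext_mmult[OF fin YX, symmetric] adj_ext)

definition superop_linear :: "qsop \<Rightarrow> bool" where
  "superop_linear F \<longleftrightarrow> (\<forall>c A B. F (\<lambda>s t. A s t + c * B s t) = (\<lambda>s t. F A s t + c * F B s t))"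

lemma superop_linearD:
  "superop_linear F \<Longrightarrow> F (\<lambda>s t. A s t + c * B s t) = (\<lambda>s t. F A s t + c * F B s t)"
  unfolding superop_linear_def by blast

lemma superop_linear_zero:
  assumes "superop_linear F" shows "F (\<lambda>s t. 0) = (\<lambda>s t. 0)"
  using superop_linearD[OF assms, of "\<lambda>s t. 0" "-1" "\<lambda>s t. 0"] by simp

lemma superop_linear_scale:
  assumes "superop_linear F" shows "F (\<lambda>s t. c * A s t) = (\<lambda>s t. c * F A s t)"
  using superop_linearD[OF assms, of "\<lambda>s t. 0" c A] by (simp add: superop_linear_zero[OF assms])

lemma superop_linear_sum:
  assumes F: "superop_linear F" and fin: "finite I"
  shows "F (\<lambda>s t. \<Sum>i\<in>I. f i s t) = (\<lambda>s t. \<Sum>i\<in>I. F (f i) s t)"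
  using fin
proof (induction I rule: finite_induct)
  case empty thus ?case using superop_linear_zero[OF F] by simp
next
  case (insert i I)
  thus ?case using superop_linearD[OF F, of "f i" 1 "\<lambda>s t. \<Sum>i\<in>I. f i s t"] by simp
qed

lemma superop_linear_sext:
  assumes D: "DProg V E"
  shows "superop_linear (sext V X E)"
proof -
  have "E (\<lambda>s t. A s t + c * B s t) = (\<lambda>s t. E A s t + c * E B s t)" if "is_op V A" "is_op V B" for c A B
  proof -
    have "is_op V (\<lambda>s t. c * B s t)" using that(2) unfolding is_op_def by auto
    thus ?thesis using DProgD(2)[OF D that(1)] DProgD(3)[OF D that(2)] by simp
  qed
  moreover have "block_op V a b (\<lambda>s t. A s t + c * B s t) = (\<lambda>s t. block_op V a b A s t + c * block_op V a b B s t)"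
    for a b c A B unfolding block_op_def by (intro ext) auto
  ultimately show ?thesis unfolding superop_linear_def sext_block_op by (auto intro!: ext)
qed

section \<open>The dual of a program\<close>

definition matrix_unit :: "nat set \<Rightarrow> nat set \<Rightarrow> qop" where
  "matrix_unit s t = (\<lambda>a b. if a = s \<and> b = t then 1 else 0)"

lemma is_op_matrix_unit: "s \<subseteq> Y \<Longrightarrow> t \<subseteq> Y \<Longrightarrow> is_op Y (matrix_unit s t)"
  unfolding is_op_def matrix_unit_def by auto

lemma op_eq_sum_matrix_units:
  assumes fin: "finite Y" and A: "is_op Y A"
  shows "A = (\<lambda>a b. \<Sum>p\<in>Pow Y \<times> Pow Y. A (fst p) (snd p) * matrix_unit (fst p) (snd p) a b)"
proof (intro ext)
  fix a b
  have "(\<Sum>p\<in>Pow Y \<times> Pow Y. A (fst p) (snd p) * matrix_unit (fst p) (snd p) a b)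
      = (\<Sum>p\<in>Pow Y \<times> Pow Y. if p = (a, b) then A a b else 0)"
    by (intro sum.cong refl) (auto simp: matrix_unit_def)
  also have "\<dots> = A a b"
    using fin A unfolding is_op_def by (simp add: sum.delta)
  finally show "A a b = (\<Sum>p\<in>Pow Y \<times> Pow Y. A (fst p) (snd p) * matrix_unit (fst p) (snd p) a b)" ..
qed

lemma qtrace_mmult_sum_left:
  assumes "finite P"
  shows "qtrace Y (mmult Y (\<lambda>a b. \<Sum>p\<in>P. f p a b) B) = (\<Sum>p\<in>P. qtrace Y (mmult Y (f p) B))"
  using assms
proof (induction P rule: finite_induct)
  case empty
  have "mmult Y (\<lambda>a b. 0) B = (\<lambda>a b. 0 * mmult Y (\<lambda>a b. 0) B a b)"
    using mmult_scale_left[of Y 0 "\<lambda>a b. 0" B] by simp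
  thus ?case by (simp add: qtrace_def)
next
  case (insert p P)
  have "qtrace Y (mmult Y (\<lambda>a b. \<Sum>p\<in>insert p P. f p a b) B)
      = qtrace Y (mmult Y (\<lambda>a b. f p a b + (\<Sum>p\<in>P. f p a b)) B)"
    using insert by simp
  also have "\<dots> = qtrace Y (mmult Y (f p) B) + qtrace Y (mmult Y (\<lambda>a b. \<Sum>p\<in>P. f p a b) B)"
    unfolding mmult_add_left qtrace_add by simp
  finally show ?case using insert by simp
qed

lemma qtrace_mmult_matrix_unit:
  assumes fin: "finite Y" and s: "s \<subseteq> Y" and t: "t \<subseteq> Y"
  shows "qtrace Y (mmult Y (matrix_unit s t) G) = G t s"
proof -
  have "qtrace Y (mmult Y (matrix_unit s t) G) = (\<Sum>a\<in>Pow Y. if a = s then G t a else 0)"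
    unfolding qtrace_def
  proof (intro sum.cong refl)
    fix a assume a: "a \<in> Pow Y"
    have "mmult Y (matrix_unit s t) G a a = (\<Sum>r\<in>Pow Y. if r = t then (if a = s then G r a else 0) else 0)"
      using a by (simp add: mmult_eq matrix_unit_def) (intro sum.cong refl, auto)
    also have "\<dots> = (if a = s then G t a else 0)" using fin t by (simp add: sum.delta)
    finally show "mmult Y (matrix_unit s t) G a a = (if a = s then G t a else 0)" .
  qed
  also have "\<dots> = G t s" using fin s by (simp add: sum.delta)
  finally show ?thesis .
qed

definition sadj_matrix :: "nat set \<Rightarrow> qsop \<Rightarrow> qop \<Rightarrow> qop" where
  "sadj_matrix Y F B = (\<lambda>t s. if t \<subseteq> Y \<and> s \<subseteq> Y then qtrace Y (mmult Y (F (matrix_unit s t)) B) else 0)"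

lemma qtrace_mmult_sadj_matrix:
  assumes fin: "finite Y" and F: "superop_linear F" and A: "is_op Y A"
  shows "qtrace Y (mmult Y (F A) B) = qtrace Y (mmult Y A (sadj_matrix Y F B))"
proof -
  let ?F = "F"
  let ?P = "Pow Y \<times> Pow Y"
  have finP: "finite ?P" using fin by simp
  have "?F A = ?F (\<lambda>a b. \<Sum>p\<in>?P. A (fst p) (snd p) * matrix_unit (fst p) (snd p) a b)"
    by (subst op_eq_sum_matrix_units[OF fin A]) (rule refl)
  also have "\<dots> = (\<lambda>a b. \<Sum>p\<in>?P. A (fst p) (snd p) * ?F (matrix_unit (fst p) (snd p)) a b)"
    unfolding superop_linear_sum[OF F finP] superop_linear_scale[OF F] ..
  finally have FA: "?F A = (\<lambda>a b. \<Sum>p\<in>?P. A (fst p) (snd p) * ?F (matrix_unit (fst p) (snd p)) a b)" .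
  have "qtrace Y (mmult Y (?F A) B) = (\<Sum>p\<in>?P. qtrace Y (mmult Y (\<lambda>a b. A (fst p) (snd p) * ?F (matrix_unit (fst p) (snd p)) a b) B))"
    unfolding FA by (rule qtrace_mmult_sum_left[OF finP])
  also have "\<dots> = (\<Sum>p\<in>?P. A (fst p) (snd p) * sadj_matrix Y ?F B (snd p) (fst p))"
    by (intro sum.cong refl) (auto simp: mmult_scale_left qtrace_scale sadj_matrix_def)
  also have "\<dots> = (\<Sum>s\<in>Pow Y. \<Sum>t\<in>Pow Y. A s t * sadj_matrix Y ?F B t s)"
    by (subst sum.cartesian_product) (simp add: case_prod_beta)
  also have "\<dots> = qtrace Y (mmult Y A (sadj_matrix Y ?F B))"
    unfolding qtrace_def by (intro sum.cong refl) (simp add: mmult_eq)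
  finally show ?thesis .
qed

lemma is_op_sadj_matrix: "is_op Y (sadj_matrix Y F B)"
  unfolding is_op_def sadj_matrix_def by auto

lemma sadj_eq_sadj_matrix:
  assumes fin: "finite Y" and F: "superop_linear F"
  shows "sadj Y F B = sadj_matrix Y F B"
  unfolding sadj_def
proof (rule the_equality)
  show "is_op Y (sadj_matrix Y (F) B) \<and>
    (\<forall>A. is_op Y A \<longrightarrow> qtrace Y (mmult Y (F A) B) = qtrace Y (mmult Y A (sadj_matrix Y (F) B)))"
    using qtrace_mmult_sadj_matrix[OF fin F] is_op_sadj_matrix by blast
next
  fix G assume G: "is_op Y G \<and> (\<forall>A. is_op Y A \<longrightarrow> qtrace Y (mmult Y (F A) B) = qtrace Y (mmult Y A G))"
  show "G = sadj_matrix Y (F) B"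
  proof (intro ext)
    fix t s
    show "G t s = sadj_matrix Y (F) B t s"
    proof (cases "t \<subseteq> Y \<and> s \<subseteq> Y")
      case True
      have "G t s = qtrace Y (mmult Y (matrix_unit s t) G)" using qtrace_mmult_matrix_unit[OF fin] True by simp
      also have "\<dots> = qtrace Y (mmult Y (F (matrix_unit s t)) B)" using G is_op_matrix_unit True by metis
      also have "\<dots> = sadj_matrix Y (F) B t s" using True by (simp add: sadj_matrix_def)
      finally show ?thesis .
    next
      case False thus ?thesis using G unfolding is_op_def sadj_matrix_def by auto
    qed
  qed
qed

lemma qtrace_ext_sext_dual:
  assumes fin: "finite X" and YX: "Y \<subseteq> X" and VY: "V \<subseteq> Y" and D: "DProg V E"
  shows "qtrace X (mmult X (ext Y X B) (sext V X E \<rho>)) = qtrace X (mmult X (ext Y X (sadj Y (sext V Y E) B)) \<rho>)"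
proof -
  have finY: "finite Y" using fin YX finite_subset by auto
  let ?G = "sadj Y (sext V Y E) B"
  have "qtrace X (mmult X (ext Y X B) (sext V X E \<rho>)) = (\<Sum>c\<in>Pow (X - Y). qtrace Y (mmult Y B (block_op Y c c (sext V X E \<rho>))))"
    by (rule qtrace_ext_mmult_block_sum[OF fin YX])
  also have "\<dots> = (\<Sum>c\<in>Pow (X - Y). qtrace Y (mmult Y (sext V Y E (block_op Y c c \<rho>)) B))"
    by (intro sum.cong refl) (simp add: block_op_sext[OF VY YX] qtrace_mmult_comm[of Y B])
  also have "\<dots> = (\<Sum>c\<in>Pow (X - Y). qtrace Y (mmult Y ?G (block_op Y c c \<rho>)))"
    by (intro sum.cong refl) (simp add: sadj_eq_sadj_matrix[OF finY superop_linear_sext[OF D]]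
        qtrace_mmult_sadj_matrix[OF finY superop_linear_sext[OF D] is_op_block_op] qtrace_mmult_comm[of Y "block_op Y _ _ \<rho>"])
  also have "\<dots> = qtrace X (mmult X (ext Y X ?G) \<rho>)"
    by (rule qtrace_ext_mmult_block_sum[OF fin YX, symmetric])
  finally show ?thesis .
qed

section \<open>Support of a positive operator\<close>

definition mat_trace :: "complex mat \<Rightarrow> complex" where
  "mat_trace A = (\<Sum>i<dim_row A. A $$ (i,i))"

lemma mat_trace_mult_comm:
  assumes A: "A \<in> carrier_mat n n" and B: "B \<in> carrier_mat n n"
  shows "mat_trace (A * B) = mat_trace (B * A)"
proof -
  have "mat_trace (A * B) = (\<Sum>i<n. \<Sum>k<n. A $$ (i,k) * B $$ (k,i))"
    unfolding mat_trace_def using A B by (intro sum.cong) (auto simp: scalar_prod_def atLeast0LessThan)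
  also have "\<dots> = (\<Sum>k<n. \<Sum>i<n. B $$ (k,i) * A $$ (i,k))"
    by (subst sum.swap) (simp add: mult.commute)
  also have "\<dots> = mat_trace (B * A)"
    unfolding mat_trace_def using A B by (intro sum.cong) (auto simp: scalar_prod_def atLeast0LessThan)
  finally show ?thesis .
qed

lemma mat_trace_similar:
  assumes S: "similar_mat_wit A T P Q" and A: "A \<in> carrier_mat n n"
  shows "mat_trace A = mat_trace T"
proof -
  have dims: "T \<in> carrier_mat n n" "P \<in> carrier_mat n n" "Q \<in> carrier_mat n n"
    and PQ: "Q * P = 1\<^sub>m n" and eq: "A = P * T * Q"
    using S A unfolding similar_mat_wit_def Let_def by auto
  have "mat_trace A = mat_trace ((P * T) * Q)" using eq by simp
  also have "\<dots> = mat_trace (Q * (P * T))" by (rule mat_trace_mult_comm) (use dims in auto)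
  also have "Q * (P * T) = (Q * P) * T" using dims by (simp add: assoc_mult_mat)
  also have "\<dots> = T" using PQ dims by simp
  finally show ?thesis .
qed

lemma mat_trace_eq_sum_diag: "mat_trace T = sum_list (diag_mat T)"
  unfolding mat_trace_def diag_mat_def using sum_set_upt_conv_sum_list_nat[of "\<lambda>i. T $$ (i,i)" 0 "dim_row T"]
  by (simp add: lessThan_atLeast0)

lemma eigenvector_of_mat_trace_nonzero:
  assumes M: "(M :: complex mat) \<in> carrier_mat n n" and tr: "mat_trace M \<noteq> 0"
  obtains v a where "eigenvector M v a" and "a \<noteq> 0"
proof -
  \<comment> \<open>the trace is the sum of the eigenvalues, read off the diagonal of a Schur form\<close>
  obtain as where cp: "char_poly M = (\<Prod>a\<leftarrow>as. [:- a, 1:])" using char_poly_factorized[OF M] by blast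
  obtain T P Q where sd: "schur_decomposition M as = (T, P, Q)" by (cases "schur_decomposition M as") auto
  from schur_decomposition[OF M cp sd] have S: "similar_mat_wit M T P Q" and dg: "diag_mat T = as" by auto
  have "sum_list as \<noteq> 0" using tr mat_trace_similar[OF S M] mat_trace_eq_sum_diag[of T] dg by simp
  then obtain a where a: "a \<in> set as" "a \<noteq> 0"
    by (metis (mono_tags, lifting) sum_list_0 map_idI)
  have "poly (char_poly M) a = 0" unfolding cp poly_prod_list
    using a(1) by (simp add: prod_list_zero_iff)
  hence "eigenvalue M a" using eigenvalue_root_char_poly[OF M] by simp
  thus ?thesis using a(2) that unfolding eigenvalue_def by blast
qed

lemma eigenvector_of_coordinates:
  fixes B :: qop
  assumes f: "bij_betw f {0..<n} (Pow Y)" and v: "v \<in> carrier_vec n" "v \<noteq> 0\<^sub>v n"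
    and Mv: "mat n n (\<lambda>(i,j). B (f i) (f j)) *\<^sub>v v = a \<cdot>\<^sub>v v"
  defines "w \<equiv> \<lambda>s. if s \<in> Pow Y then v $ (inv_into {0..<n} f s) else 0"
  shows "is_vec Y w" "w \<noteq> (\<lambda>s. 0)" "mapply Y B w = (\<lambda>s. a * w s)"
proof -
  define g where "g = inv_into {0..<n} f"
  define M where "M = mat n n (\<lambda>(i,j). B (f i) (f j))"
  have fr: "j < n \<Longrightarrow> f j \<in> Pow Y" for j using f unfolding bij_betw_def by auto
  have fg: "s \<in> Pow Y \<Longrightarrow> f (g s) = s" for s using f unfolding g_def by (simp add: bij_betw_inv_into_right)
  have gr: "s \<in> Pow Y \<Longrightarrow> g s < n" for s
    using inv_into_into[of s f "{0..<n}"] f unfolding g_def bij_betw_def by auto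
  have gf: "j < n \<Longrightarrow> g (f j) = j" for j using f unfolding g_def bij_betw_def by (simp add: inv_into_f_f)
  show "is_vec Y w" unfolding is_vec_def w_def by auto
  show "w \<noteq> (\<lambda>s. 0)"
  proof
    assume w0: "w = (\<lambda>s. 0)"
    have "v $ j = 0" if j: "j < n" for j
      using fun_cong[OF w0, of "f j"] fr[OF j] gf[OF j] unfolding w_def g_def[symmetric] by simp
    hence "v = 0\<^sub>v n" using v(1) by (intro eq_vecI) auto
    thus False using v(2) by simp
  qed
  show "mapply Y B w = (\<lambda>s. a * w s)"
  proof (intro ext)
    fix s
    show "mapply Y B w s = a * w s"
    proof (cases "s \<subseteq> Y")
      case True
      have "mapply Y B w s = (\<Sum>j\<in>{0..<n}. B s (f j) * w (f j))"
        using True sum.reindex_bij_betw[OF f, of "\<lambda>t. B s t * w t"] by (simp add: mapply_eq)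
      also have "\<dots> = (\<Sum>j\<in>{0..<n}. M $$ (g s, j) * v $ j)"
        using True gr fg fr gf unfolding M_def w_def g_def[symmetric] by (intro sum.cong refl) auto
      also have "\<dots> = (M *\<^sub>v v) $ (g s)" using gr[of s] True v(1) unfolding M_def by (simp add: scalar_prod_def)
      also have "\<dots> = a * w s" using Mv gr[of s] True v(1) unfolding M_def w_def g_def by simp
      finally show ?thesis .
    qed (simp add: mapply_def w_def)
  qed
qed

lemma eigenvector_of_qtrace_nonzero:
  assumes fin: "finite Y" and tr: "qtrace Y B \<noteq> 0"
  obtains w e where "is_vec Y w" "w \<noteq> (\<lambda>s. 0)" "e \<noteq> 0" "mapply Y B w = (\<lambda>s. e * w s)"
proof -
  obtain n :: nat and f where f: "bij_betw f {0..<n} (Pow Y)"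
    using ex_bij_betw_nat_finite[of "Pow Y"] fin by auto
  define M where "M = mat n n (\<lambda>(i,j). B (f i) (f j))"
  have Mc: "M \<in> carrier_mat n n" unfolding M_def by simp
  have "mat_trace M = (\<Sum>i\<in>{0..<n}. B (f i) (f i))" unfolding mat_trace_def M_def by (simp add: lessThan_atLeast0)
  also have "\<dots> = qtrace Y B" unfolding qtrace_def by (rule sum.reindex_bij_betw[OF f, of "\<lambda>s. B s s"])
  finally obtain v a where ev: "eigenvector M v a" and a: "a \<noteq> 0"
    using eigenvector_of_mat_trace_nonzero[OF Mc] tr by metis
  have v: "v \<in> carrier_vec n" "v \<noteq> 0\<^sub>v n" "M *\<^sub>v v = a \<cdot>\<^sub>v v" using ev Mc unfolding eigenvector_def by auto
  note w = eigenvector_of_coordinates[OF f v(1,2) v(3)[unfolded M_def]]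
  show ?thesis by (rule that[OF w(1,2) a w(3)])
qed

abbreviation nonzero_eigenvectors :: "nat set \<Rightarrow> qop \<Rightarrow> qvec set" where
  "nonzero_eigenvectors Y A \<equiv> {v. is_vec Y v \<and> (\<exists>e. e \<noteq> 0 \<and> mapply Y A v = (\<lambda>s. e * v s))}"

lemma supp_memI: "finite S \<Longrightarrow> S \<subseteq> nonzero_eigenvectors Y A \<Longrightarrow> (\<lambda>s. \<Sum>v\<in>S. c v * v s) \<in> supp Y A"
  unfolding supp_def by blast

lemma supp_memE:
  assumes "\<psi> \<in> supp Y A"
  obtains S c where "finite S" "S \<subseteq> nonzero_eigenvectors Y A" "\<psi> = (\<lambda>s. \<Sum>v\<in>S. c v * v s)"
  using assms unfolding supp_def by blast

lemma is_vec_lincomb: "(\<And>v. v \<in> S \<Longrightarrow> is_vec Y v) \<Longrightarrow> is_vec Y (\<lambda>s. \<Sum>v\<in>S. c v * v s)"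
  unfolding is_vec_def by simp

lemma lincomb_extend:
  fixes c :: "qvec \<Rightarrow> complex"
  assumes "finite T" "S \<subseteq> T"
  shows "(\<Sum>v\<in>S. c v * v s) = (\<Sum>v\<in>T. (if v \<in> S then c v else 0) * v s)"
  by (rule sum.mono_neutral_cong_left[OF assms]) auto

lemma subsp_supp: "subsp Y (supp Y A)"
proof (rule subspI)
  fix \<psi> assume "\<psi> \<in> supp Y A"
  then obtain S c where "S \<subseteq> nonzero_eigenvectors Y A" "\<psi> = (\<lambda>s. \<Sum>v\<in>S. c v * v s)" by (rule supp_memE)
  thus "is_vec Y \<psi>" using is_vec_lincomb[of S Y c] by blast
next
  show "(\<lambda>s. 0) \<in> supp Y A" using supp_memI[of "{}" Y A] by simp
next
  fix a u w assume u: "u \<in> supp Y A" and w: "w \<in> supp Y A"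
  obtain S1 c1 where S1: "finite S1" "S1 \<subseteq> nonzero_eigenvectors Y A" and u: "u = (\<lambda>s. \<Sum>v\<in>S1. c1 v * v s)"
    using u by (rule supp_memE)
  obtain S2 c2 where S2: "finite S2" "S2 \<subseteq> nonzero_eigenvectors Y A" and w: "w = (\<lambda>s. \<Sum>v\<in>S2. c2 v * v s)"
    using w by (rule supp_memE)
  define c where "c = (\<lambda>v. (if v \<in> S1 then c1 v else 0) + a * (if v \<in> S2 then c2 v else 0))"
  have fin: "finite (S1 \<union> S2)" using S1 S2 by simp
  have "(\<lambda>s. u s + a * w s) = (\<lambda>s. \<Sum>v\<in>S1 \<union> S2. c v * v s)"
    unfolding u w lincomb_extend[OF fin Un_upper1, of c1] lincomb_extend[OF fin Un_upper2, of c2]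
    by (simp add: c_def algebra_simps sum.distrib sum_distrib_left)
  thus "(\<lambda>s. u s + a * w s) \<in> supp Y A" using supp_memI[OF fin] S1 S2 by simp
qed

lemma eigenvalue_choice:
  assumes "S \<subseteq> nonzero_eigenvectors Y A"
  obtains e where "\<And>v. v \<in> S \<Longrightarrow> e v \<noteq> 0 \<and> mapply Y A v = (\<lambda>s. e v * v s)"
proof -
  have "\<forall>v\<in>S. \<exists>e. e \<noteq> 0 \<and> mapply Y A v = (\<lambda>s. e * v s)" using assms by blast
  from bchoice[OF this] show ?thesis using that by blast
qed

lemma mapply_in_supp:
  assumes "\<psi> \<in> supp Y A" shows "mapply Y A \<psi> \<in> supp Y A"
proof -
  obtain S c where S: "finite S" "S \<subseteq> nonzero_eigenvectors Y A" and \<psi>: "\<psi> = (\<lambda>s. \<Sum>v\<in>S. c v * v s)"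
    using assms by (rule supp_memE)
  obtain e where e: "\<And>v. v \<in> S \<Longrightarrow> e v \<noteq> 0 \<and> mapply Y A v = (\<lambda>s. e v * v s)"
    using eigenvalue_choice[OF S(2)] by blast
  have "mapply Y A \<psi> = (\<lambda>s. \<Sum>v\<in>S. (c v * e v) * v s)"
    unfolding \<psi> mapply_sum_vec mapply_scale_vec using e by (intro ext sum.cong refl) (simp add: mult.assoc)
  thus ?thesis using supp_memI[OF S] by simp
qed

lemma supp_subset_op_range: "supp Y A \<subseteq> op_range Y A"
proof
  fix \<psi> assume "\<psi> \<in> supp Y A"
  then obtain S c where S: "finite S" "S \<subseteq> nonzero_eigenvectors Y A" and \<psi>: "\<psi> = (\<lambda>s. \<Sum>v\<in>S. c v * v s)"
    by (rule supp_memE)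
  obtain e where e: "\<And>v. v \<in> S \<Longrightarrow> e v \<noteq> 0 \<and> mapply Y A v = (\<lambda>s. e v * v s)"
    using eigenvalue_choice[OF S(2)] by blast
  have "mapply Y A (\<lambda>s. \<Sum>v\<in>S. (c v / e v) * v s) = \<psi>"
    unfolding \<psi> mapply_sum_vec mapply_scale_vec using e by (intro ext sum.cong refl) simp
  moreover have "is_vec Y (\<lambda>s. \<Sum>v\<in>S. (c v / e v) * v s)" by (rule is_vec_lincomb) (use S(2) in blast)
  ultimately show "\<psi> \<in> op_range Y A" unfolding op_range_def by blast
qed

lemma mmult_projector_commute_of_invariant:
  assumes fin: "finite X" and P: "projector X P" and A: "adj A = A"
    and inv: "\<And>\<psi>. \<psi> \<in> img X P \<Longrightarrow> mapply X A \<psi> \<in> img X P"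
  shows "mmult X P A = mmult X A P"
proof -
  have PAP: "mmult X P (mmult X A P) = mmult X A P"
  proof (rule mmult_eq_right_column[OF is_op_mmult])
    fix t assume t: "t \<subseteq> X"
    have "mapply X A (column X P t) \<in> img X P" by (rule inv[OF column_in_img[OF P t]])
    thus "mapply X P (column X (mmult X A P) t) = column X (mmult X A P) t"
      unfolding mapply_column[OF t, symmetric] img_def by simp
  qed
  have "adj (mmult X P (mmult X A P)) = adj (mmult X A P)" using PAP by simp
  hence "mmult X (mmult X P A) P = mmult X P A" unfolding adj_mmult projectorD(3)[OF P] A .
  thus ?thesis using PAP by (simp add: mmult_assoc)
qed

lemma mmult_proj_compl_supp_zero:
  assumes fin: "finite X" and A: "positive X A" and P: "projector X P" and IP: "img X P = supp X A"
  shows "mmult X A (proj_compl X P) = (\<lambda>s t. 0)"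
proof -
  let ?P' = "proj_compl X P"
  note PD = projectorD[OF P]
  have P': "projector X ?P'" by (rule projector_proj_compl[OF fin P])
  have comm: "mmult X P A = mmult X A P"
    by (rule mmult_projector_commute_of_invariant[OF fin P positive_hermitian[OF fin A]])
      (use IP mapply_in_supp in auto)
  have comm': "mmult X ?P' A = mmult X A ?P'"
    unfolding proj_compl_eq[OF PD(1)] mmult_diff_left mmult_diff_right comm
      mmult_idop_left[OF fin positiveD(3)[OF A]] mmult_idop_right[OF fin positiveD(3)[OF A]] ..
  have PP': "mmult X P ?P' = (\<lambda>s t. 0)"
    unfolding proj_compl_eq[OF PD(1)] mmult_diff_right mmult_idop_right[OF fin PD(1)] PD(2) by simp
  define B where "B = mmult X (mmult X (adj ?P') A) ?P'"
  have Bx: "mapply X B x = mapply X ?P' (mapply X A (mapply X ?P' x))" for x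
    unfolding B_def projectorD(3)[OF P'] mapply_mmult ..
  \<comment> \<open>an eigenvector of \<open>B\<close> for a nonzero eigenvalue would be one of \<open>A\<close> outside the support\<close>
  have "qtrace X B = 0"
  proof (rule ccontr)
    assume "qtrace X B \<noteq> 0"
    then obtain w e where w: "is_vec X w" "w \<noteq> (\<lambda>s. 0)" and e: "e \<noteq> 0" and Bw: "mapply X B w = (\<lambda>s. e * w s)"
      by (rule eigenvector_of_qtrace_nonzero[OF fin])
    have "w = mapply X B (\<lambda>s. (1 / e) * w s)" unfolding mapply_scale_vec Bw using e by simp
    hence "w \<in> img X ?P'" using mapply_in_img[OF P'] unfolding Bx by metis
    hence P'w: "mapply X ?P' w = w" unfolding img_def by simp
    have "mapply X A w = mapply X ?P' (mapply X A w)"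
      by (subst (1) P'w[symmetric]) (simp flip: mapply_mmult add: comm')
    also have "\<dots> = (\<lambda>s. e * w s)" using Bw unfolding Bx P'w .
    finally have "w \<in> supp X A" using supp_memI[of "{w}" X A "\<lambda>_. 1"] w(1) e by auto
    hence "mapply X P w = w" using IP unfolding img_def by auto
    moreover have "mapply X P w = (\<lambda>s. 0)"
      by (subst P'w[symmetric]) (simp flip: mapply_mmult add: PP' mapply_zero_op)
    ultimately show False using w(2) by simp
  qed
  thus ?thesis using mmult_zero_of_qtrace_sandwich_zero[OF fin A] unfolding B_def by simp
qed

lemma op_range_subset_supp:
  assumes fin: "finite X" and A: "positive X A"
  shows "op_range X A \<subseteq> supp X A"
proof
  obtain P where P: "projector X P" and IP: "img X P = supp X A"
    using projector_onto_subspace[OF fin subsp_supp] by blast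
  fix x assume "x \<in> op_range X A"
  then obtain v where v: "is_vec X v" and x: "x = mapply X A v" unfolding op_range_def by auto
  have "mapply X A (mapply X (proj_compl X P) v) = (\<lambda>s. 0)"
    unfolding mapply_mmult[symmetric] mmult_proj_compl_supp_zero[OF fin A P IP] by (rule mapply_zero_op)
  hence "x = mapply X A (mapply X P v)"
    unfolding x mapply_proj_compl[OF fin projectorD(1)[OF P] v] mapply_diff_vec by (rule vec_eq_of_diff_zero)
  moreover have "mapply X P v \<in> supp X A" using mapply_in_img[OF P] IP by simp
  ultimately show "x \<in> supp X A" using mapply_in_supp by simp
qed

lemma supp_eq_op_range: "finite X \<Longrightarrow> positive X A \<Longrightarrow> supp X A = op_range X A"
  using supp_subset_op_range op_range_subset_supp by blast

section \<open>Weakest preconditions and strongest postconditions\<close>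

lemma qtrace_ext_idop_diff:
  assumes "finite X" "Y \<subseteq> X" "is_op X \<sigma>"
  shows "qtrace X (mmult X (ext Y X (\<lambda>s t. idop Y s t - A s t)) \<sigma>) = qtrace X \<sigma> - qtrace X (mmult X (ext Y X A) \<sigma>)"
  unfolding ext_diff ext_idop[OF assms(2)] mmult_diff_left qtrace_diff mmult_idop_left[OF assms(1,3)] ..

lemma qtrace_ext_sandwich:
  assumes "finite X" "Y \<subseteq> X"
  shows "qtrace X (mmult X (ext Y X (mmult Y (mmult Y C M) C)) \<rho>)
    = qtrace X (mmult X (ext Y X M) (mmult X (mmult X (ext Y X C) \<rho>) (ext Y X C)))"
  unfolding ext_mmult[OF assms] by (rule qtrace_mmult_cycle3)

lemma qtrace_positive_nonneg:
  assumes "finite X" "positive X \<sigma>"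
  shows "0 \<le> Re (qtrace X \<sigma>)"
  using qtrace_projector_nonneg(2)[OF projector_idop[OF assms(1)] assms(2)]
  by (simp add: mmult_idop_left[OF assms(1) positiveD(3)[OF assms(2)]])

lemma mmult_projector_zero_of_qtrace_zero:
  assumes fin: "finite X" and P: "projector X P" and A: "positive X A"
    and z: "Re (qtrace X (mmult X P A)) = 0"
  shows "mmult X A P = (\<lambda>s t. 0)" "mmult X P A = (\<lambda>s t. 0)"
proof -
  show AP: "mmult X A P = (\<lambda>s t. 0)"
    by (rule mmult_zero_of_qtrace_sandwich_zero[OF fin A]) (use z in \<open>simp add: qtrace_projector_sandwich[OF P]\<close>)
  have "adj (mmult X A P) = adj (\<lambda>s t. 0)" using AP by simp
  thus "mmult X P A = (\<lambda>s t. 0)"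
    unfolding adj_mmult projectorD(3)[OF P] positive_hermitian[OF fin A] adj_zero .
qed

lemma op_range_subset_img_iff:
  assumes fin: "finite X" and R: "projector X R"
  shows "op_range X A \<subseteq> img X R \<longleftrightarrow> mmult X (proj_compl X R) A = (\<lambda>s t. 0)"
proof -
  note R'v = mapply_proj_compl[OF fin projectorD(1)[OF R]]
  show ?thesis
  proof
    assume H: "op_range X A \<subseteq> img X R"
    show "mmult X (proj_compl X R) A = (\<lambda>s t. 0)"
    proof (rule mmult_eq_zero_column)
      fix t assume t: "t \<subseteq> X"
      have "column X A t \<in> op_range X A"
        unfolding op_range_def mapply_unitv[OF fin t, symmetric] using is_vec_unitv[OF t] by blast
      hence "mapply X R (column X A t) = column X A t" using H unfolding img_def by blast
      thus "mapply X (proj_compl X R) (column X A t) = (\<lambda>s. 0)" unfolding R'v[OF is_vec_column] by simp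
    qed
  next
    assume RA: "mmult X (proj_compl X R) A = (\<lambda>s t. 0)"
    show "op_range X A \<subseteq> img X R"
    proof
      fix w assume "w \<in> op_range X A"
      then obtain v where w: "w = mapply X A v" unfolding op_range_def by auto
      have "mapply X (proj_compl X R) w = (\<lambda>s. 0)"
        unfolding w mapply_mmult[symmetric] RA by (rule mapply_zero_op)
      hence "w = mapply X R w" unfolding R'v[OF is_vec_mapply[of X A v, folded w]] by (rule vec_eq_of_diff_zero)
      thus "w \<in> img X R" unfolding img_def w by simp
    qed
  qed
qed

lemma mapply_eq_of_qinner_le:
  assumes fin: "finite X" and pos: "positive X (\<lambda>s t. idop X s t - M s t)" and v: "is_vec X \<psi>"
    and le: "Re (qinner X \<psi> \<psi>) \<le> Re (qinner X \<psi> (mapply X M \<psi>))"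
  shows "mapply X M \<psi> = \<psi>"
proof -
  have e: "qinner X \<psi> (mapply X (\<lambda>s t. idop X s t - M s t) \<psi>) = qinner X \<psi> \<psi> - qinner X \<psi> (mapply X M \<psi>)"
    unfolding mapply_diff_op mapply_idop[OF fin v] qinner_diff_right ..
  have "qinner X \<psi> (mapply X (\<lambda>s t. idop X s t - M s t) \<psi>) = 0"
    using positiveD(1,2)[OF pos v] le unfolding e by (auto simp: complex_is_Real_iff complex_eq_iff)
  hence "mapply X (\<lambda>s t. idop X s t - M s t) \<psi> = (\<lambda>s. 0)" by (rule positive_mapply_zero[OF fin pos v])
  hence "\<psi> = mapply X M \<psi>" unfolding mapply_diff_op mapply_idop[OF fin v] by (rule vec_eq_of_diff_zero)
  thus ?thesis ..
qed

definition subnormalize :: "nat set \<Rightarrow> qop \<Rightarrow> qop" where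
  "subnormalize X \<sigma> = (\<lambda>s t. complex_of_real (1 / (1 + Re (qtrace X \<sigma>))) * \<sigma> s t)"

lemma pdo_subnormalize:
  assumes "finite X" "positive X \<sigma>"
  shows "pdo X (subnormalize X \<sigma>)"
proof -
  have n0: "0 \<le> Re (qtrace X \<sigma>)" by (rule qtrace_positive_nonneg[OF assms])
  have "Re (qtrace X (subnormalize X \<sigma>)) = Re (qtrace X \<sigma>) / (1 + Re (qtrace X \<sigma>))"
    unfolding subnormalize_def qtrace_scale by simp
  also have "\<dots> \<le> 1" using n0 by simp
  moreover have "positive X (subnormalize X \<sigma>)"
    unfolding subnormalize_def by (rule positive_scale[OF assms(2)]) (use n0 in simp)
  ultimately show ?thesis unfolding pdo_def by simp
qed

lemma Re_qtrace_subnormalize: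
  "Re (qtrace X (mmult X A (subnormalize X \<sigma>))) = Re (qtrace X (mmult X A \<sigma>)) / (1 + Re (qtrace X \<sigma>))"
  "Re (qtrace X (subnormalize X \<sigma>)) = Re (qtrace X \<sigma>) / (1 + Re (qtrace X \<sigma>))"
  unfolding subnormalize_def mmult_scale_right qtrace_scale by simp_all

lemma img_greatest_projector:
  assumes fin: "finite Y" and S: "subsp Y S" and ok: "\<And>P. projector Y P \<Longrightarrow> ok P \<longleftrightarrow> img Y P \<subseteq> S"
  shows "img Y (THE P. projector Y P \<and> ok P \<and> (\<forall>P'. projector Y P' \<and> ok P' \<longrightarrow> proj_le Y P' P)) = S"
proof -
  obtain P0 where P0: "projector Y P0" and I0: "img Y P0 = S" using projector_onto_subspace[OF fin S] by blast
  have "(THE P. projector Y P \<and> ok P \<and> (\<forall>P'. projector Y P' \<and> ok P' \<longrightarrow> proj_le Y P' P)) = P0"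
  proof (rule the_equality)
    show "projector Y P0 \<and> ok P0 \<and> (\<forall>P'. projector Y P' \<and> ok P' \<longrightarrow> proj_le Y P' P0)"
      using P0 I0 ok unfolding proj_le_def by auto
  next
    fix P assume H: "projector Y P \<and> ok P \<and> (\<forall>P'. projector Y P' \<and> ok P' \<longrightarrow> proj_le Y P' P)"
    hence "img Y P = img Y P0" using P0 I0 ok unfolding proj_le_def by blast
    thus "P = P0" using projector_eqI_img H P0 by blast
  qed
  thus ?thesis using I0 by simp
qed

lemma img_least_projector:
  assumes fin: "finite Y" and S: "subsp Y S" and ok: "\<And>R. projector Y R \<Longrightarrow> ok R \<longleftrightarrow> S \<subseteq> img Y R"
  shows "img Y (THE R. projector Y R \<and> ok R \<and> (\<forall>R'. projector Y R' \<and> ok R' \<longrightarrow> proj_le Y R R')) = S"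
proof -
  obtain R0 where R0: "projector Y R0" and I0: "img Y R0 = S" using projector_onto_subspace[OF fin S] by blast
  have "(THE R. projector Y R \<and> ok R \<and> (\<forall>R'. projector Y R' \<and> ok R' \<longrightarrow> proj_le Y R R')) = R0"
  proof (rule the_equality)
    show "projector Y R0 \<and> ok R0 \<and> (\<forall>R'. projector Y R' \<and> ok R' \<longrightarrow> proj_le Y R0 R')"
      using R0 I0 ok unfolding proj_le_def by auto
  next
    fix R assume H: "projector Y R \<and> ok R \<and> (\<forall>R'. projector Y R' \<and> ok R' \<longrightarrow> proj_le Y R R')"
    hence "img Y R = img Y R0" using R0 I0 ok unfolding proj_le_def by blast
    thus "R = R0" using projector_eqI_img H R0 by blast
  qed
  thus ?thesis using I0 by simp
qed

locale quantum_program =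
  fixes V Y :: "nat set" and E :: qsop
  assumes finite_Y: "finite Y" and V_subset_Y: "V \<subseteq> Y" and DProg: "DProg V E"
begin

abbreviation dual :: "qop \<Rightarrow> qop" where
  "dual \<equiv> sadj Y (sext V Y E)"

lemma is_op_dual: "is_op Y (dual B)"
  unfolding sadj_eq_sadj_matrix[OF finite_Y superop_linear_sext[OF DProg]] by (rule is_op_sadj_matrix)

lemma positive_sext: "finite X \<Longrightarrow> Y \<subseteq> X \<Longrightarrow> positive X \<rho> \<Longrightarrow> positive X (sext V X E \<rho>)"
  using DProgD(4)[OF DProg] V_subset_Y by blast

lemma qtrace_duality: "finite X \<Longrightarrow> Y \<subseteq> X \<Longrightarrow>
   qtrace X (mmult X (ext Y X B) (sext V X E \<rho>)) = qtrace X (mmult X (ext Y X (dual B)) \<rho>)"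
  by (rule qtrace_ext_sext_dual[OF _ _ V_subset_Y DProg])

lemma qtrace_dual_mmult: "is_op Y B \<Longrightarrow> qtrace Y (mmult Y (dual B) \<sigma>) = qtrace Y (mmult Y B (sext V Y E \<sigma>))"
  using qtrace_duality[OF finite_Y order_refl, of B \<sigma>] by (simp add: ext_self is_op_dual)

lemma qtrace_ext_sext_nonneg:
  assumes R: "projector Y R" and X: "finite X" "Y \<subseteq> X" and \<rho>: "positive X \<rho>"
  shows "0 \<le> Re (qtrace X (mmult X (ext Y X R) (sext V X E \<rho>)))"
  using qtrace_projector_nonneg[OF projector_ext[OF X R] positive_sext[OF X \<rho>]] by auto

lemma qtrace_ext_sext_le:
  assumes R: "projector Y R" and X: "finite X" "Y \<subseteq> X" and \<rho>: "positive X \<rho>"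
  shows "Re (qtrace X (mmult X (ext Y X R) (sext V X E \<rho>))) \<le> Re (qtrace X \<rho>)"
proof -
  have "0 \<le> Re (qtrace X (mmult X (ext Y X (proj_compl Y R)) (sext V X E \<rho>)))"
    by (rule qtrace_ext_sext_nonneg[OF projector_proj_compl[OF finite_Y R] X \<rho>])
  hence "Re (qtrace X (mmult X (ext Y X R) (sext V X E \<rho>))) \<le> Re (qtrace X (sext V X E \<rho>))"
    unfolding proj_compl_eq[OF projectorD(1)[OF R]] qtrace_ext_idop_diff[OF X is_op_sext] by simp
  also have "\<dots> \<le> Re (qtrace X \<rho>)" using qtrace_sext_le[OF X(1) DProg _ \<rho>] V_subset_Y X(2) by blast
  finally show ?thesis .
qed

lemma positive_dual:
  assumes R: "projector Y R"
  shows "positive Y (dual R)"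
  unfolding positive_def
proof (intro conjI allI impI)
  show "is_op Y (dual R)" by (rule is_op_dual)
  fix v assume v: "is_vec Y v"
  have "qinner Y v (mapply Y (dual R) v) = qtrace Y (mmult Y R (sext V Y E (outer v v)))"
    unfolding qtrace_mmult_outer[OF v, symmetric] qtrace_dual_mmult[OF projectorD(1)[OF R]] ..
  thus "qinner Y v (mapply Y (dual R) v) \<in> \<real>" "0 \<le> Re (qinner Y v (mapply Y (dual R) v))"
    using qtrace_projector_nonneg[OF R positive_sext[OF finite_Y order_refl positive_outer[OF v]]] by auto
qed

lemma positive_idop_diff_dual:
  assumes R: "projector Y R"
  shows "positive Y (\<lambda>s t. idop Y s t - dual R s t)"
  unfolding positive_def
proof (intro conjI allI impI)
  show "is_op Y (\<lambda>s t. idop Y s t - dual R s t)" by (rule is_op_diff[OF is_op_idop is_op_dual])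
  fix v assume v: "is_vec Y v"
  have e: "qinner Y v (mapply Y (\<lambda>s t. idop Y s t - dual R s t) v) = qinner Y v v - qinner Y v (mapply Y (dual R) v)"
    unfolding mapply_diff_op mapply_idop[OF finite_Y v] qinner_diff_right ..
  have "qinner Y v (mapply Y (dual R) v) = qtrace Y (mmult Y (ext Y Y R) (sext V Y E (outer v v)))"
    unfolding qtrace_mmult_outer[OF v, symmetric] qtrace_dual_mmult[OF projectorD(1)[OF R]]
      ext_self[OF projectorD(1)[OF R]] ..
  hence "Re (qinner Y v (mapply Y (dual R) v)) \<le> Re (qinner Y v v)"
    using qtrace_ext_sext_le[OF R finite_Y order_refl positive_outer[OF v]] by (simp add: qtrace_outer)
  moreover have "qinner Y v (mapply Y (dual R) v) \<in> \<real>" using positiveD(1)[OF positive_dual[OF R] v] .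
  ultimately show "qinner Y v (mapply Y (\<lambda>s t. idop Y s t - dual R s t) v) \<in> \<real>"
    "0 \<le> Re (qinner Y v (mapply Y (\<lambda>s t. idop Y s t - dual R s t) v))"
    unfolding e by (auto simp: qinner_self_real)
qed

lemma tot_iff_qtrace_le:
  "tot V Y E P Q \<longleftrightarrow> (\<forall>X \<rho>. finite X \<longrightarrow> Y \<subseteq> X \<longrightarrow> pdo X \<rho> \<longrightarrow>
     Re (qtrace X (mmult X (ext Y X P) \<rho>)) \<le> Re (qtrace X (mmult X (ext Y X (dual Q)) \<rho>)))"
  unfolding tot_def using qtrace_duality by auto

lemma par_iff_qtrace_le:
  assumes R: "projector Y R"
  shows "par V Y E P R \<longleftrightarrow> (\<forall>X \<rho>. finite X \<longrightarrow> Y \<subseteq> X \<longrightarrow> pdo X \<rho> \<longrightarrow>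
     Re (qtrace X (mmult X (ext Y X P) \<rho>)) + Re (qtrace X (mmult X (ext Y X (dual (proj_compl Y R))) \<rho>))
       \<le> Re (qtrace X \<rho>))"
proof -
  have "qtrace X (mmult X (ext Y X (dual (proj_compl Y R))) \<rho>)
      = qtrace X (sext V X E \<rho>) - qtrace X (mmult X (ext Y X R) (sext V X E \<rho>))" if X: "finite X" "Y \<subseteq> X" for X \<rho>
    unfolding qtrace_duality[OF X, symmetric] proj_compl_eq[OF projectorD(1)[OF R]]
    by (rule qtrace_ext_idop_diff[OF X is_op_sext])
  thus ?thesis unfolding par_def by force
qed

lemma tot_imp_qtrace_le:
  assumes T: "tot V Y E P Q" and \<sigma>: "positive Y \<sigma>" and P: "is_op Y P"
  shows "Re (qtrace Y (mmult Y P \<sigma>)) \<le> Re (qtrace Y (mmult Y (dual Q) \<sigma>))"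
proof -
  have "Re (qtrace Y (mmult Y (ext Y Y P) (subnormalize Y \<sigma>))) \<le> Re (qtrace Y (mmult Y (ext Y Y (dual Q)) (subnormalize Y \<sigma>)))"
    using T pdo_subnormalize[OF finite_Y \<sigma>] finite_Y unfolding tot_iff_qtrace_le by blast
  moreover have "0 < 1 + Re (qtrace Y \<sigma>)" using qtrace_positive_nonneg[OF finite_Y \<sigma>] by simp
  ultimately show ?thesis
    unfolding ext_self[OF P] ext_self[OF is_op_dual] Re_qtrace_subnormalize by (simp add: divide_le_cancel)
qed

lemma par_imp_qtrace_le:
  assumes T: "par V Y E P R" and R: "projector Y R" and \<sigma>: "positive Y \<sigma>" and P: "is_op Y P"
  shows "Re (qtrace Y (mmult Y P \<sigma>)) + Re (qtrace Y (mmult Y (dual (proj_compl Y R)) \<sigma>)) \<le> Re (qtrace Y \<sigma>)"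
proof -
  have "Re (qtrace Y (mmult Y (ext Y Y P) (subnormalize Y \<sigma>)))
      + Re (qtrace Y (mmult Y (ext Y Y (dual (proj_compl Y R))) (subnormalize Y \<sigma>))) \<le> Re (qtrace Y (subnormalize Y \<sigma>))"
    using T pdo_subnormalize[OF finite_Y \<sigma>] finite_Y unfolding par_iff_qtrace_le[OF R] by blast
  moreover have "0 < 1 + Re (qtrace Y \<sigma>)" using qtrace_positive_nonneg[OF finite_Y \<sigma>] by simp
  ultimately show ?thesis
    unfolding ext_self[OF P] ext_self[OF is_op_dual] Re_qtrace_subnormalize add_divide_distrib[symmetric]
    by (simp add: divide_le_cancel)
qed

lemma qtrace_le_dual_of_img_subset:
  assumes P: "projector Y P" and Q: "projector Y Q" and PM: "img Y P \<subseteq> img Y (dual Q)"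
    and X: "finite X" "Y \<subseteq> X" and \<rho>: "positive X \<rho>"
  shows "Re (qtrace X (mmult X (ext Y X P) \<rho>)) \<le> Re (qtrace X (mmult X (ext Y X (dual Q)) \<rho>))"
proof -
  let ?M = "dual Q"
  define P' where "P' = (\<lambda>s t. idop Y s t - P s t)"
  note PD = projectorD[OF P]
  have MP: "mmult Y ?M P = P" by (rule mmult_eq_right_of_img[OF P PM])
  have "adj (mmult Y ?M P) = adj P" using MP by simp
  hence PM: "mmult Y P ?M = P" unfolding adj_mmult positive_hermitian[OF finite_Y positive_dual[OF Q]] PD(3) .
  \<comment> \<open>\<open>P\<close> and \<open>M\<close> commute, so compressing \<open>M\<close> to the complement of \<open>P\<close> leaves \<open>M - P\<close>\<close>
  have K: "mmult Y (mmult Y P' ?M) P' = (\<lambda>s t. ?M s t - P s t)"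
    unfolding P'_def mmult_diff_left mmult_diff_right mmult_idop_left[OF finite_Y is_op_dual] PM
      mmult_idop_right[OF finite_Y is_op_dual] mmult_idop_right[OF finite_Y PD(1)] MP PD(2) by simp
  define \<rho>' where "\<rho>' = mmult X (mmult X (ext Y X P') \<rho>) (ext Y X P')"
  have pos: "positive X \<rho>'" unfolding \<rho>'_def
    by (rule positive_sandwich[OF \<rho>]) (simp add: adj_ext P'_def adj_idop_diff[OF PD(3)])
  have "qtrace X (mmult X (ext Y X ?M) \<rho>) - qtrace X (mmult X (ext Y X P) \<rho>)
      = qtrace X (mmult X (ext Y X (mmult Y (mmult Y P' ?M) P')) \<rho>)"
    unfolding K ext_diff mmult_diff_left qtrace_diff ..
  also have "\<dots> = qtrace X (mmult X (ext Y X Q) (sext V X E \<rho>'))"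
    unfolding qtrace_ext_sandwich[OF X] qtrace_duality[OF X] \<rho>'_def ..
  finally have e: "qtrace X (mmult X (ext Y X ?M) \<rho>) - qtrace X (mmult X (ext Y X P) \<rho>)
      = qtrace X (mmult X (ext Y X Q) (sext V X E \<rho>'))" .
  show ?thesis using qtrace_ext_sext_nonneg[OF Q X pos] unfolding e[symmetric] by simp
qed

lemma qtrace_add_dual_le_of_mmult_zero:
  assumes P: "projector Y P" and R: "projector Y R" and NP: "mmult Y (dual R) P = (\<lambda>s t. 0)"
    and X: "finite X" "Y \<subseteq> X" and \<rho>: "positive X \<rho>"
  shows "Re (qtrace X (mmult X (ext Y X P) \<rho>)) + Re (qtrace X (mmult X (ext Y X (dual R)) \<rho>)) \<le> Re (qtrace X \<rho>)"
proof -
  let ?N = "dual R"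
  define P' where "P' = (\<lambda>s t. idop Y s t - P s t)"
  note PD = projectorD[OF P]
  have "adj (mmult Y ?N P) = adj (\<lambda>s t. 0)" using NP by simp
  hence PN: "mmult Y P ?N = (\<lambda>s t. 0)"
    unfolding adj_mmult positive_hermitian[OF finite_Y positive_dual[OF R]] PD(3) adj_zero .
  have opP': "is_op Y P'" unfolding P'_def by (rule is_op_diff[OF is_op_idop PD(1)])
  have P'P': "mmult Y P' P' = P'"
    using projectorD(2)[OF projector_proj_compl[OF finite_Y P]] unfolding proj_compl_eq[OF PD(1)] P'_def .
  have P'N: "mmult Y P' ?N = ?N"
    unfolding P'_def mmult_diff_left mmult_idop_left[OF finite_Y is_op_dual] PN by simp
  have NP': "mmult Y ?N P' = ?N"
    unfolding P'_def mmult_diff_right mmult_idop_right[OF finite_Y is_op_dual] NP by simp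
  \<comment> \<open>\<open>P\<close> and \<open>N\<close> annihilate each other, so compressing \<open>I - N\<close> to the complement of \<open>P\<close> leaves \<open>I - P - N\<close>\<close>
  have K: "mmult Y (mmult Y P' (\<lambda>s t. idop Y s t - ?N s t)) P' = (\<lambda>s t. idop Y s t - (P s t + ?N s t))"
    unfolding mmult_diff_right mmult_idop_right[OF finite_Y opP'] P'N mmult_diff_left P'P' NP'
    unfolding P'_def by (simp add: algebra_simps)
  define \<rho>' where "\<rho>' = mmult X (mmult X (ext Y X P') \<rho>) (ext Y X P')"
  have pos: "positive X \<rho>'" unfolding \<rho>'_def
    by (rule positive_sandwich[OF \<rho>]) (simp add: adj_ext P'_def adj_idop_diff[OF PD(3)])
  have "qtrace X \<rho> - (qtrace X (mmult X (ext Y X P) \<rho>) + qtrace X (mmult X (ext Y X ?N) \<rho>))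
      = qtrace X (mmult X (ext Y X (mmult Y (mmult Y P' (\<lambda>s t. idop Y s t - ?N s t)) P')) \<rho>)"
    unfolding K qtrace_ext_idop_diff[OF X positiveD(3)[OF \<rho>]] ext_lin[where c = 1, simplified]
      mmult_add_left qtrace_add ..
  also have "\<dots> = qtrace X \<rho>' - qtrace X (mmult X (ext Y X R) (sext V X E \<rho>'))"
    unfolding qtrace_ext_sandwich[OF X] \<rho>'_def[symmetric]
      qtrace_ext_idop_diff[OF X positiveD(3)[OF pos]] qtrace_duality[OF X] ..
  finally have e: "qtrace X \<rho> - (qtrace X (mmult X (ext Y X P) \<rho>) + qtrace X (mmult X (ext Y X ?N) \<rho>))
      = qtrace X \<rho>' - qtrace X (mmult X (ext Y X R) (sext V X E \<rho>'))" .
  show ?thesis using qtrace_ext_sext_le[OF R X pos] arg_cong[OF e, of Re] by simp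
qed

lemma tot_iff_img_subset:
  assumes P: "projector Y P" and Q: "projector Y Q"
  shows "tot V Y E P Q \<longleftrightarrow> img Y P \<subseteq> img Y (dual Q)"
proof
  assume "img Y P \<subseteq> img Y (dual Q)"
  thus "tot V Y E P Q" unfolding tot_iff_qtrace_le pdo_def
    using qtrace_le_dual_of_img_subset[OF P Q] by blast
next
  assume T: "tot V Y E P Q"
  show "img Y P \<subseteq> img Y (dual Q)"
  proof
    fix \<psi> assume "\<psi> \<in> img Y P"
    hence v: "is_vec Y \<psi>" and Pv: "mapply Y P \<psi> = \<psi>" unfolding img_def by auto
    have "Re (qinner Y \<psi> \<psi>) \<le> Re (qinner Y \<psi> (mapply Y (dual Q) \<psi>))"
      using tot_imp_qtrace_le[OF T positive_outer[OF v] projectorD(1)[OF P]]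
      unfolding qtrace_mmult_outer[OF v] Pv .
    hence "mapply Y (dual Q) \<psi> = \<psi>"
      by (rule mapply_eq_of_qinner_le[OF finite_Y positive_idop_diff_dual[OF Q] v])
    thus "\<psi> \<in> img Y (dual Q)" using v unfolding img_def by simp
  qed
qed

lemma par_iff_img_subset_Nnull:
  assumes P: "projector Y P" and Q: "projector Y Q"
  shows "par V Y E P Q \<longleftrightarrow> img Y P \<subseteq> Nnull Y (dual (proj_compl Y Q))"
proof
  let ?N = "dual (proj_compl Y Q)"
  assume "img Y P \<subseteq> Nnull Y ?N"
  hence "mmult Y ?N P = (\<lambda>s t. 0)"
    using mmult_eq_zero_of_img[OF P] Nnull_positive[OF finite_Y positive_dual[OF projector_proj_compl[OF finite_Y Q]]]
    by simp
  thus "par V Y E P Q" unfolding par_iff_qtrace_le[OF Q] pdo_def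
    using qtrace_add_dual_le_of_mmult_zero[OF P projector_proj_compl[OF finite_Y Q]] by blast
next
  let ?N = "dual (proj_compl Y Q)"
  assume T: "par V Y E P Q"
  show "img Y P \<subseteq> Nnull Y ?N"
  proof
    fix \<psi> assume "\<psi> \<in> img Y P"
    hence v: "is_vec Y \<psi>" and Pv: "mapply Y P \<psi> = \<psi>" unfolding img_def by auto
    have "Re (qinner Y \<psi> \<psi>) + Re (qinner Y \<psi> (mapply Y ?N \<psi>)) \<le> Re (qinner Y \<psi> \<psi>)"
      using par_imp_qtrace_le[OF T Q positive_outer[OF v] projectorD(1)[OF P]]
      unfolding qtrace_mmult_outer[OF v] qtrace_outer Pv .
    moreover note positiveD(1,2)[OF positive_dual[OF projector_proj_compl[OF finite_Y Q]] v]
    ultimately have "qinner Y \<psi> (mapply Y ?N \<psi>) = 0" by (auto simp: complex_is_Real_iff complex_eq_iff)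
    thus "\<psi> \<in> Nnull Y ?N" using v unfolding Nnull_def by simp
  qed
qed

lemma par_iff_op_range_subset_img:
  assumes Q: "projector Y Q" and R: "projector Y R"
  shows "par V Y E Q R \<longleftrightarrow> op_range Y (sext V Y E Q) \<subseteq> img Y R"
proof -
  let ?A = "sext V Y E Q" and ?R' = "proj_compl Y R"
  let ?N = "dual ?R'"
  have R': "projector Y ?R'" by (rule projector_proj_compl[OF finite_Y R])
  have A: "positive Y ?A" by (rule positive_sext[OF finite_Y order_refl projector_positive[OF Q]])
  have NQ_R'A: "qtrace Y (mmult Y ?N Q) = qtrace Y (mmult Y ?R' ?A)"
    by (rule qtrace_dual_mmult[OF projectorD(1)[OF R']])
  show ?thesis unfolding op_range_subset_img_iff[OF finite_Y R]
  proof
    assume T: "par V Y E Q R"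
    have "Re (qtrace Y (mmult Y Q Q)) + Re (qtrace Y (mmult Y ?N Q)) \<le> Re (qtrace Y Q)"
      by (rule par_imp_qtrace_le[OF T R projector_positive[OF Q] projectorD(1)[OF Q]])
    hence "Re (qtrace Y (mmult Y ?R' ?A)) \<le> 0" unfolding projectorD(2)[OF Q] NQ_R'A by simp
    hence "Re (qtrace Y (mmult Y ?R' ?A)) = 0" using qtrace_projector_nonneg(2)[OF R' A] by simp
    thus "mmult Y ?R' ?A = (\<lambda>s t. 0)" by (rule mmult_projector_zero_of_qtrace_zero(2)[OF finite_Y R' A])
  next
    assume "mmult Y ?R' ?A = (\<lambda>s t. 0)"
    hence "Re (qtrace Y (mmult Y Q ?N)) = 0"
      unfolding qtrace_mmult_comm[of Y Q] NQ_R'A by (simp add: qtrace_def)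
    hence "mmult Y ?N Q = (\<lambda>s t. 0)"
      by (rule mmult_projector_zero_of_qtrace_zero(1)[OF finite_Y Q positive_dual[OF R']])
    thus "par V Y E Q R" unfolding par_iff_qtrace_le[OF R] pdo_def
      using qtrace_add_dual_le_of_mmult_zero[OF Q R'] by blast
  qed
qed

lemma img_wpp:
  assumes "projector Y Q"
  shows "img Y (wpp V Y E Q) = img Y (dual Q)"
  unfolding wpp_def by (rule img_greatest_projector[OF finite_Y subsp_img tot_iff_img_subset[OF _ assms]])

lemma img_wlpp:
  assumes Q: "projector Y Q"
  shows "img Y (wlpp V Y E Q) = Nnull Y (dual (proj_compl Y Q))"
proof -
  have "subsp Y (Nnull Y (dual (proj_compl Y Q)))"
    unfolding Nnull_positive[OF finite_Y positive_dual[OF projector_proj_compl[OF finite_Y Q]]]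
    by (rule subsp_op_kernel)
  thus ?thesis
    unfolding wlpp_def by (rule img_greatest_projector[OF finite_Y _ par_iff_img_subset_Nnull[OF _ Q]])
qed

lemma img_spp:
  assumes "projector Y Q"
  shows "img Y (spp V Y E Q) = op_range Y (sext V Y E Q)"
  unfolding spp_def by (rule img_least_projector[OF finite_Y subsp_op_range par_iff_op_range_subset_img[OF assms]])

end

theorem lemma4p6:
  fixes V W :: "nat set" and E :: qsop and Q :: qop
  assumes "finite V" and "DProg V E" and "finite W" and "projector W Q"
  shows "img (V \<union> W) (wpp V (V \<union> W) E (ext W (V \<union> W) Q))
           = Efix (V \<union> W) (sadj (V \<union> W) (sext V (V \<union> W) E) (ext W (V \<union> W) Q)) \<and>
         img (V \<union> W) (wlpp V (V \<union> W) E (ext W (V \<union> W) Q))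
           = Nnull (V \<union> W) (sadj (V \<union> W) (sext V (V \<union> W) E)
                                (proj_compl (V \<union> W) (ext W (V \<union> W) Q))) \<and>
         img (V \<union> W) (spp V (V \<union> W) E (ext W (V \<union> W) Q))
           = supp (V \<union> W) (sext V (V \<union> W) E (ext W (V \<union> W) Q))"
proof -
  interpret quantum_program V "V \<union> W" E
    using assms(1-3) by unfold_locales auto
  have Q: "projector (V \<union> W) (ext W (V \<union> W) Q)"
    by (rule projector_ext[OF finite_Y _ assms(4)]) simp
  have pos: "positive (V \<union> W) (sext V (V \<union> W) E (ext W (V \<union> W) Q))"
    by (rule positive_sext[OF finite_Y order_refl projector_positive[OF Q]])
  show ?thesis
    using img_wpp[OF Q] img_wlpp[OF Q] img_spp[OF Q] supp_eq_op_range[OF finite_Y pos]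
    by (simp add: Efix_def img_def)
qed

end
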